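(* Let $n\ge1$, $G=\mathbb Z/n\mathbb Z$, $\omega$ a normalized 3-cocycle of $G$ with values in $\mathbb F^\times$, $X,Y$ finite $G$-sets, and let $(F,s):\mathcal M(X,\Psi_X)\to\mathcal M(Y,\Psi_Y)$ be a simple $\mathrm{Vec}_G^\omega$-module functor. Then there is an orbit $\Gamma$ of $X\times Y$ under the diagonal $G$-action such that $m^F_{xy}:=\dim_{\mathbb F}\mathrm{Hom}(F(x),y)$ equals $1$ for $(x,y)\in\Gamma$ and $0$ otherwise.
   Context: $\mathbb F$ is an algebraically closed field. $\mathrm{Vec}_G^\omega$: monoidal category of finite-dimensional $G$-graded $\mathbb F$-vector spaces, simple objects $\delta^g$, $\delta^g\otimes\delta^h=\delta^{gh}$, associator $a_{\delta^g,\delta^h,\delta^k}=\omega(g,h,k)\mathrm{id}$ for a normalized 3-cocycle $\omega$. For a $G$-set $X$ and a normalized $\Psi:G\times G\times X\to\mathbb F^\times$ with $\Psi(h,k,g^{-1}\cdot x)\Psi^{-1}(gh,k,x)\Psi(g,hk,x)\Psi^{-1}(g,h,x)=\omega^{-1}(g,h,k)$, $\mathcal M(X,\Psi)$ is the category of finite-dimensional $X$-graded vector spaces (simple objects $x\in X$) with $\delta^g\triangleright x=g\cdot x$ and module constraint $m_{\delta^g,\delta^h,x}=\Psi(g,h,(gh)\cdot x)\mathrm{id}_{(gh)\cdot x}$. A module functor $(F,s)$ is an $\mathbb F$-linear functor with natural isomorphism $s_{C,M}:F(C\triangleright M)\to C\triangleright F(M)$ satisfying $m'_{C,D,F(M)}\circ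 s_{C\otimes D,M}=(\mathrm{id}_C\triangleright s_{D,M})\circ s_{C,D\triangleright M}\circ F(m_{C,D,M})$; morphisms are natural transformations compatible with $s$. It is simple if it is simple in the abelian category of module functors $\mathcal M(X,\Psi_X)\to\mathcal M(Y,\Psi_Y)$ and their morphisms. *)

theory Defs
  imports "Jordan_Normal_Form.Matrix" "HOL-Computational_Algebra.Polynomial"
begin

text \<open>The cyclic group Z/nZ is {0..<n} with addition mod n.
An object of the module category M(X,Psi) (finite-dimensional X-graded spaces)
is a dimension function d on X (zero outside X); a morphism d -> e is a family
of matrices f x of size (e x) x (d x), x in X (the 0x0 matrix outside X).\<close>

definition alg_closed_field :: "'a::field itself \<Rightarrow> bool" where
  "alg_closed_field T = (\<forall>p::'a poly. degree p \<ge> 1 \<longrightarrow> (\<exists>z. poly p z = 0))"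

definition ginv :: "nat \<Rightarrow> nat \<Rightarrow> nat" where
  "ginv n g = (n - g mod n) mod n"

definition is_Gset :: "nat \<Rightarrow> 'x set \<Rightarrow> (nat \<Rightarrow> 'x \<Rightarrow> 'x) \<Rightarrow> bool" where
  "is_Gset n X act =
     ((\<forall>g<n. \<forall>x\<in>X. act g x \<in> X) \<and> (\<forall>x\<in>X. act 0 x = x) \<and>
      (\<forall>g<n. \<forall>h<n. \<forall>x\<in>X. act ((g + h) mod n) x = act g (act h x)))"

definition normalized_3cocycle :: "nat \<Rightarrow> (nat \<Rightarrow> nat \<Rightarrow> nat \<Rightarrow> 'a::field) \<Rightarrow> bool" where
  "normalized_3cocycle n \<omega> =
     ((\<forall>g<n. \<forall>h<n. \<forall>k<n. \<omega> g h k \<noteq> 0) \<and>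
      (\<forall>g<n. \<forall>h<n. \<omega> 0 g h = 1 \<and> \<omega> g 0 h = 1 \<and> \<omega> g h 0 = 1) \<and>
      (\<forall>g<n. \<forall>h<n. \<forall>k<n. \<forall>l<n.
         \<omega> h k l * \<omega> g ((h + k) mod n) l * \<omega> g h k
           = \<omega> ((g + h) mod n) k l * \<omega> g h ((k + l) mod n)))"

definition is_Psi :: "nat \<Rightarrow> (nat \<Rightarrow> nat \<Rightarrow> nat \<Rightarrow> 'a::field) \<Rightarrow> 'x set \<Rightarrow>
    (nat \<Rightarrow> 'x \<Rightarrow> 'x) \<Rightarrow> (nat \<Rightarrow> nat \<Rightarrow> 'x \<Rightarrow> 'a) \<Rightarrow> bool" where
  "is_Psi n \<omega> X act \<Psi> =
     ((\<forall>g<n. \<forall>h<n. \<forall>x\<in>X. \<Psi> g h x \<noteq> 0) \<and>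
      (\<forall>g<n. \<forall>x\<in>X. \<Psi> 0 g x = 1 \<and> \<Psi> g 0 x = 1) \<and>
      (\<forall>g<n. \<forall>h<n. \<forall>k<n. \<forall>x\<in>X.
         \<Psi> h k (act (ginv n g) x) * inverse (\<Psi> ((g + h) mod n) k x) *
         \<Psi> g ((h + k) mod n) x * inverse (\<Psi> g h x) = inverse (\<omega> g h k)))"

definition objs :: "'x set \<Rightarrow> ('x \<Rightarrow> nat) set" where
  "objs X = {d. \<forall>x. x \<notin> X \<longrightarrow> d x = 0}"

definition homs :: "'x set \<Rightarrow> ('x \<Rightarrow> nat) \<Rightarrow> ('x \<Rightarrow> nat) \<Rightarrow> ('x \<Rightarrow> 'a::field mat) set" where
  "homs X d e = {f. (\<forall>x\<in>X. f x \<in> carrier_mat (e x) (d x)) \<and> (\<forall>x. x \<notin> X \<longrightarrow> f x = 0\<^sub>m 0 0)}"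

definition idm :: "'x set \<Rightarrow> ('x \<Rightarrow> nat) \<Rightarrow> ('x \<Rightarrow> 'a::field mat)" where
  "idm X d = (\<lambda>x. if x \<in> X then 1\<^sub>m (d x) else 0\<^sub>m 0 0)"

definition cmp :: "'x set \<Rightarrow> ('x \<Rightarrow> 'a::field mat) \<Rightarrow> ('x \<Rightarrow> 'a mat) \<Rightarrow> ('x \<Rightarrow> 'a mat)" where
  "cmp X f g = (\<lambda>x. if x \<in> X then f x * g x else 0\<^sub>m 0 0)"

definition addm :: "'x set \<Rightarrow> ('x \<Rightarrow> 'a::field mat) \<Rightarrow> ('x \<Rightarrow> 'a mat) \<Rightarrow> ('x \<Rightarrow> 'a mat)" where
  "addm X f g = (\<lambda>x. if x \<in> X then f x + g x else 0\<^sub>m 0 0)"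

definition smultm :: "'x set \<Rightarrow> 'a::field \<Rightarrow> ('x \<Rightarrow> 'a mat) \<Rightarrow> ('x \<Rightarrow> 'a mat)" where
  "smultm X c f = (\<lambda>x. if x \<in> X then c \<cdot>\<^sub>m f x else 0\<^sub>m 0 0)"

definition is_iso :: "'x set \<Rightarrow> ('x \<Rightarrow> nat) \<Rightarrow> ('x \<Rightarrow> nat) \<Rightarrow> ('x \<Rightarrow> 'a::field mat) \<Rightarrow> bool" where
  "is_iso X d e f = (f \<in> homs X d e \<and>
     (\<exists>f' \<in> homs X e d. cmp X f' f = idm X d \<and> cmp X f f' = idm X e))"

definition simple_obj :: "'x \<Rightarrow> ('x \<Rightarrow> nat)" where
  "simple_obj x = (\<lambda>z. if z = x then 1 else 0)"

definition hom_dim :: "'x set \<Rightarrow> ('x \<Rightarrow> nat) \<Rightarrow> ('x \<Rightarrow> nat) \<Rightarrow> nat" where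
  "hom_dim X d e = (\<Sum>x\<in>X. d x * e x)"

text \<open>Action of the simple object delta^g of Vec_G^omega: (delta^g |> M)_{g.x} = M_x.\<close>
definition gobj :: "nat \<Rightarrow> 'x set \<Rightarrow> (nat \<Rightarrow> 'x \<Rightarrow> 'x) \<Rightarrow> nat \<Rightarrow> ('x \<Rightarrow> nat) \<Rightarrow> ('x \<Rightarrow> nat)" where
  "gobj n X act g d = (\<lambda>x. if x \<in> X then d (act (ginv n g) x) else 0)"

definition gmor :: "nat \<Rightarrow> 'x set \<Rightarrow> (nat \<Rightarrow> 'x \<Rightarrow> 'x) \<Rightarrow> nat \<Rightarrow> ('x \<Rightarrow> 'a::field mat) \<Rightarrow> ('x \<Rightarrow> 'a mat)" where
  "gmor n X act g f = (\<lambda>x. if x \<in> X then f (act (ginv n g) x) else 0\<^sub>m 0 0)"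

text \<open>Module constraint m_{delta^g,delta^h,d} : (gh)|>d -> g|>(h|>d), acting on the
component of degree x by Psi(g,h,x) (so on a simple object z by Psi(g,h,(gh).z)).\<close>
definition modc :: "nat \<Rightarrow> 'x set \<Rightarrow> (nat \<Rightarrow> 'x \<Rightarrow> 'x) \<Rightarrow> (nat \<Rightarrow> nat \<Rightarrow> 'x \<Rightarrow> 'a::field) \<Rightarrow>
    nat \<Rightarrow> nat \<Rightarrow> ('x \<Rightarrow> nat) \<Rightarrow> ('x \<Rightarrow> 'a mat)" where
  "modc n X act \<Psi> g h d = (\<lambda>x. if x \<in> X
      then \<Psi> g h x \<cdot>\<^sub>m 1\<^sub>m (gobj n X act ((g + h) mod n) d x) else 0\<^sub>m 0 0)"

type_synonym ('x, 'y, 'a) mfun =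
  "(('x \<Rightarrow> nat) \<Rightarrow> ('y \<Rightarrow> nat)) \<times> (('x \<Rightarrow> 'a mat) \<Rightarrow> ('y \<Rightarrow> 'a mat)) \<times>
   (nat \<Rightarrow> ('x \<Rightarrow> nat) \<Rightarrow> ('y \<Rightarrow> 'a mat))"

definition linear_functor :: "'x set \<Rightarrow> 'y set \<Rightarrow> (('x \<Rightarrow> nat) \<Rightarrow> ('y \<Rightarrow> nat)) \<Rightarrow>
    (('x \<Rightarrow> 'a::field mat) \<Rightarrow> ('y \<Rightarrow> 'a mat)) \<Rightarrow> bool" where
  "linear_functor X Y Fo Fm =
    ((\<forall>d\<in>objs X. Fo d \<in> objs Y) \<and>
     (\<forall>d\<in>objs X. \<forall>e\<in>objs X. \<forall>f\<in>homs X d e. Fm f \<in> homs Y (Fo d) (Fo e)) \<and>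
     (\<forall>d\<in>objs X. Fm (idm X d) = idm Y (Fo d)) \<and>
     (\<forall>d\<in>objs X. \<forall>e\<in>objs X. \<forall>k\<in>objs X. \<forall>f\<in>homs X d e. \<forall>f'\<in>homs X e k.
        Fm (cmp X f' f) = cmp Y (Fm f') (Fm f)) \<and>
     (\<forall>d\<in>objs X. \<forall>e\<in>objs X. \<forall>f\<in>homs X d e. \<forall>f'\<in>homs X d e.
        Fm (addm X f f') = addm Y (Fm f) (Fm f')) \<and>
     (\<forall>d\<in>objs X. \<forall>e\<in>objs X. \<forall>f\<in>homs X d e. \<forall>c.
        Fm (smultm X c f) = smultm Y c (Fm f)))"

text \<open>Vec_G^omega-module functor (F,s) : M(X,PsiX) -> M(Y,PsiY); the structure maps
s are given on the simple objects delta^g of Vec_G^omega.\<close>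
definition module_functor :: "nat \<Rightarrow> 'x set \<Rightarrow> (nat \<Rightarrow> 'x \<Rightarrow> 'x) \<Rightarrow> (nat \<Rightarrow> nat \<Rightarrow> 'x \<Rightarrow> 'a::field) \<Rightarrow>
    'y set \<Rightarrow> (nat \<Rightarrow> 'y \<Rightarrow> 'y) \<Rightarrow> (nat \<Rightarrow> nat \<Rightarrow> 'y \<Rightarrow> 'a) \<Rightarrow> ('x, 'y, 'a) mfun \<Rightarrow> bool" where
  "module_functor n X aX PX Y aY PY F = (case F of (Fo, Fm, s) \<Rightarrow>
     linear_functor X Y Fo Fm \<and>
     (\<forall>g<n. \<forall>d\<in>objs X. is_iso Y (Fo (gobj n X aX g d)) (gobj n Y aY g (Fo d)) (s g d)) \<and>
     (\<forall>g<n. \<forall>d\<in>objs X. \<forall>e\<in>objs X. \<forall>f\<in>homs X d e.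
        cmp Y (gmor n Y aY g (Fm f)) (s g d) = cmp Y (s g e) (Fm (gmor n X aX g f))) \<and>
     (\<forall>g<n. \<forall>h<n. \<forall>d\<in>objs X.
        cmp Y (modc n Y aY PY g h (Fo d)) (s ((g + h) mod n) d)
        = cmp Y (cmp Y (gmor n Y aY g (s h d)) (s g (gobj n X aX h d)))
                (Fm (modc n X aX PX g h d))))"

definition mf_mor :: "nat \<Rightarrow> 'x set \<Rightarrow> (nat \<Rightarrow> 'x \<Rightarrow> 'x) \<Rightarrow> 'y set \<Rightarrow> (nat \<Rightarrow> 'y \<Rightarrow> 'y) \<Rightarrow>
    ('x, 'y, 'a::field) mfun \<Rightarrow> ('x, 'y, 'a) mfun \<Rightarrow> (('x \<Rightarrow> nat) \<Rightarrow> ('y \<Rightarrow> 'a mat)) \<Rightarrow> bool" where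
  "mf_mor n X aX Y aY F F' \<eta> = (case F of (Fo, Fm, s) \<Rightarrow> case F' of (Fo', Fm', s') \<Rightarrow>
     (\<forall>d\<in>objs X. \<eta> d \<in> homs Y (Fo d) (Fo' d)) \<and>
     (\<forall>d\<in>objs X. \<forall>e\<in>objs X. \<forall>f\<in>homs X d e. cmp Y (Fm' f) (\<eta> d) = cmp Y (\<eta> e) (Fm f)) \<and>
     (\<forall>g<n. \<forall>d\<in>objs X.
        cmp Y (s' g d) (\<eta> (gobj n X aX g d)) = cmp Y (gmor n Y aY g (\<eta> d)) (s g d)))"

context
  fixes n :: nat and X :: "'x set" and aX :: "nat \<Rightarrow> 'x \<Rightarrow> 'x" and PX :: "nat \<Rightarrow> nat \<Rightarrow> 'x \<Rightarrow> 'a::field"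
    and Y :: "'y set" and aY :: "nat \<Rightarrow> 'y \<Rightarrow> 'y" and PY :: "nat \<Rightarrow> nat \<Rightarrow> 'y \<Rightarrow> 'a"
begin

definition mf_zero :: "('x, 'y, 'a) mfun \<Rightarrow> bool" where
  "mf_zero F = (\<forall>d\<in>objs X. \<forall>y. fst F d y = 0)"

definition mf_mono :: "('x, 'y, 'a) mfun \<Rightarrow> ('x, 'y, 'a) mfun \<Rightarrow> (('x \<Rightarrow> nat) \<Rightarrow> ('y \<Rightarrow> 'a mat)) \<Rightarrow> bool" where
  "mf_mono H F \<iota> = (mf_mor n X aX Y aY H F \<iota> \<and>
     (\<forall>K \<alpha> \<beta>. module_functor n X aX PX Y aY PY K \<longrightarrow>
        mf_mor n X aX Y aY K H \<alpha> \<longrightarrow> mf_mor n X aX Y aY K H \<beta> \<longrightarrow>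
        (\<forall>d\<in>objs X. cmp Y (\<iota> d) (\<alpha> d) = cmp Y (\<iota> d) (\<beta> d)) \<longrightarrow>
        (\<forall>d\<in>objs X. \<alpha> d = \<beta> d)))"

definition mf_iso :: "('x, 'y, 'a) mfun \<Rightarrow> ('x, 'y, 'a) mfun \<Rightarrow> (('x \<Rightarrow> nat) \<Rightarrow> ('y \<Rightarrow> 'a mat)) \<Rightarrow> bool" where
  "mf_iso H F \<iota> = (mf_mor n X aX Y aY H F \<iota> \<and>
     (\<exists>\<theta>. mf_mor n X aX Y aY F H \<theta> \<and>
        (\<forall>d\<in>objs X. cmp Y (\<theta> d) (\<iota> d) = idm Y (fst H d) \<and> cmp Y (\<iota> d) (\<theta> d) = idm Y (fst F d))))"

definition simple_mf :: "('x, 'y, 'a) mfun \<Rightarrow> bool" where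
  "simple_mf F = (module_functor n X aX PX Y aY PY F \<and> \<not> mf_zero F \<and>
     (\<forall>H \<iota>. module_functor n X aX PX Y aY PY H \<longrightarrow> mf_mono H F \<iota> \<longrightarrow> mf_zero H \<or> mf_iso H F \<iota>))"

end

end

theory Submission
  imports Defs "Jordan_Normal_Form.Char_Poly"
begin

text \<open>
  By Schur's lemma an endomorphism of a simple module functor is zero or injective, its kernel
  being a module subfunctor. Decomposing objects into simple ones, any family of matrices on the
  multiplicity spaces \<open>F(x)\<^sub>y\<close> that is compatible with the structure isomorphisms \<open>s\<close> extends
  to such an endomorphism. The indicator of the diagonal orbit of a pair \<open>(x0, y0)\<close> with nonzero
  multiplicity is such a family, so all multiplicities off this orbit vanish, while along it they
  are nonzero since \<open>s\<close> is invertible. Finally the stabiliser of a pair \<open>(x1, y1)\<close> is cyclic,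
  so its structure maps on \<open>F(x1)\<^sub>y\<^sub>1\<close> are multiples of powers of one matrix \<open>P\<close>. If that
  space had dimension at least 2, a nonzero singular matrix commuting with \<open>P\<close>, which exists
  over an algebraically closed field, transported along the orbit would give a compatible family
  that is neither zero nor injective.
\<close>

section \<open>Matrices\<close>

lemma assoc_mult_mat_dim: "dim_col A = dim_row B \<Longrightarrow> dim_col B = dim_row C \<Longrightarrow> A * B * C = A * (B * C)"
  by (rule assoc_mult_mat[of A "dim_row A" "dim_col A" B "dim_col B" C "dim_col C"]) auto

lemma mult_add_distrib_mat_dim:
  "dim_col A = dim_row B \<Longrightarrow> dim_row B = dim_row C \<Longrightarrow> dim_col B = dim_col C \<Longrightarrow>
   A * (B + C) = A * B + A * C"
  by (rule mult_add_distrib_mat[of A "dim_row A" "dim_col A" B "dim_col B" C]) auto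

lemma add_mult_distrib_mat_dim:
  "dim_row A = dim_row B \<Longrightarrow> dim_col A = dim_col B \<Longrightarrow> dim_col A = dim_row C \<Longrightarrow>
   (A + B) * C = A * C + B * C"
  by (rule add_mult_distrib_mat[of A "dim_row A" "dim_col A" B C "dim_col C"]) auto

lemma mult_smult_distrib_dim: "dim_col A = dim_row B \<Longrightarrow> A * (k \<cdot>\<^sub>m B) = (k::'a::comm_ring_1) \<cdot>\<^sub>m (A * B)"
  by (rule mult_smult_distrib[of A "dim_row A" "dim_col A" B "dim_col B"]) auto

lemma mult_smult_assoc_mat_dim: "dim_col A = dim_row B \<Longrightarrow> (k \<cdot>\<^sub>m A) * B = (k::'a::comm_ring_1) \<cdot>\<^sub>m (A * B)"
  by (rule mult_smult_assoc_mat[of A "dim_row A" "dim_col A" B "dim_col B"]) auto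

lemma smult_one_mult_mat: "dim_row M = k \<Longrightarrow> (a \<cdot>\<^sub>m 1\<^sub>m k) * M = (a::'a::comm_ring_1) \<cdot>\<^sub>m M"
  by (simp add: mult_smult_assoc_mat_dim)

lemma mult_smult_one_mat: "dim_col M = k \<Longrightarrow> M * (a \<cdot>\<^sub>m 1\<^sub>m k) = (a::'a::comm_ring_1) \<cdot>\<^sub>m M"
  by (simp add: mult_smult_distrib_dim)

lemma smult_smult_mat: "a \<cdot>\<^sub>m (b \<cdot>\<^sub>m A) = (a * b :: 'a::semigroup_mult) \<cdot>\<^sub>m A"
  by (rule eq_matI) (auto simp: mult.assoc)

lemma zero_smult_mat: "(A :: 'a::comm_ring_1 mat) \<in> carrier_mat r c \<Longrightarrow> 0 \<cdot>\<^sub>m A = 0\<^sub>m r c"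
  by (rule eq_matI) auto

lemma smult_mat_eq_imp_inverse: "(a::'a::field) \<noteq> 0 \<Longrightarrow> a \<cdot>\<^sub>m A = B \<Longrightarrow> A = inverse a \<cdot>\<^sub>m B"
  by (auto intro!: eq_matI)

lemma mult_mat_zero_inner: "A \<in> carrier_mat a 0 \<Longrightarrow> B \<in> carrier_mat 0 c \<Longrightarrow> A * B = 0\<^sub>m a c"
  by (rule eq_matI) (auto simp: scalar_prod_def)

lemma one_mat_eq_zero_mat: "(1\<^sub>m k :: 'a::zero_neq_one mat) = 0\<^sub>m k k \<Longrightarrow> k = 0"
  by (metis index_one_mat(1) index_zero_mat(1) neq0_conv zero_neq_one)

lemma one_smult_mat [simp]: "(1 :: 'a::monoid_mult) \<cdot>\<^sub>m A = A"
  by (rule eq_matI) auto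

definition kernel_retract :: "'a::field mat \<Rightarrow> nat \<Rightarrow> nat \<Rightarrow> 'a mat \<Rightarrow> 'a mat \<Rightarrow> bool" where
  "kernel_retract M k r A B \<longleftrightarrow> A \<in> carrier_mat k r \<and> B \<in> carrier_mat r k \<and> B * A = 1\<^sub>m r \<and>
     M * A = 0\<^sub>m k r \<and> (\<forall>c N. N \<in> carrier_mat k c \<longrightarrow> M * N = 0\<^sub>m k c \<longrightarrow> A * (B * N) = N)"

lemma echelon_pivot_prefix:
  assumes C: "C \<in> carrier_mat nr nc" and pf: "pivot_fun C f nc"
  obtains r where "r \<le> nr" "\<And>i. i < r \<Longrightarrow> f i < nc"
    "\<And>i j. r \<le> i \<Longrightarrow> i < nr \<Longrightarrow> j < nc \<Longrightarrow> C $$ (i, j) = 0"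
proof
  note pd = pivot_funD[OF carrier_matD(1)[OF C] pf]
  define r where "r = (LEAST i. nr \<le> i \<or> f i = nc)"
  show r_le: "r \<le> nr" unfolding r_def by (rule Least_le) simp
  show "f i < nc" if "i < r" for i
    using not_less_Least[OF that[unfolded r_def]] pd(1)[of i] r_le that by fastforce
  have full: "f i = nc" if "r \<le> i" "i < nr" for i
    using that
  proof (induction i rule: dec_induct)
    case base
    then show ?case using LeastI[of "\<lambda>i. nr \<le> i \<or> f i = nc" nr] unfolding r_def by auto
  next
    case (step i)
    then show ?case using pd(1)[of "Suc i"] pd(3)[of i] by fastforce
  qed
  show "C $$ (i, j) = 0" if "r \<le> i" "i < nr" "j < nc" for i j
    using pd(2)[of i j] full that by auto
qed

text \<open>A pivot column of \<open>C\<close> reads off one coordinate of \<open>W\<close>.\<close>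
lemma pivot_coordinate_zero:
  fixes C W :: "'a::comm_ring_1 mat"
  assumes C: "C \<in> carrier_mat k k" and pf: "pivot_fun C f k" and W: "W \<in> carrier_mat k c"
    and CW: "C\<^sup>T * W = 0\<^sub>m k c" and i: "i < k" and fi: "f i < k" and j: "j < c"
  shows "W $$ (i, j) = 0"
proof -
  note pd = pivot_funD[OF carrier_matD(1)[OF C] pf]
  have "(C\<^sup>T * W) $$ (f i, j) = (\<Sum>a<k. C $$ (a, f i) * W $$ (a, j))"
    using C W fi j by (auto simp: scalar_prod_def intro!: sum.cong)
  also have "\<dots> = W $$ (i, j)"
    using pd(4)[OF i fi] pd(5)[OF i fi] i by (subst sum.remove[of _ i]) (auto intro!: sum.neutral)
  finally show ?thesis using CW fi j by simp
qed

lemma tail_rows_section: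
  fixes P Q N :: "'a::comm_ring_1 mat"
  assumes P: "P \<in> carrier_mat k k" and Q: "Q \<in> carrier_mat k k" and PTQT: "P\<^sup>T * Q\<^sup>T = 1\<^sub>m k"
    and N: "N \<in> carrier_mat k c" and r: "r \<le> k"
    and coords: "\<And>i j. i < r \<Longrightarrow> j < c \<Longrightarrow> (Q\<^sup>T * N) $$ (i, j) = 0"
  shows "mat k (k - r) (\<lambda>(i, l). P $$ (r + l, i)) * (mat (k - r) k (\<lambda>(l, j). Q $$ (j, r + l)) * N) = N"
    (is "?A * (?B * N) = N")
proof (rule eq_matI)
  define W where "W = Q\<^sup>T * N"
  have W: "W \<in> carrier_mat k c" unfolding W_def using Q N by simp
  have N_eq: "N = P\<^sup>T * W"
    unfolding W_def using N P Q PTQT assoc_mult_mat[of "P\<^sup>T" k k "Q\<^sup>T" k N c] by simp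
  fix i j assume ij: "i < dim_row N" "j < dim_col N"
  have BN: "(?B * N) $$ (l, j) = W $$ (r + l, j)" if "l < k - r" for l
    using that ij N Q unfolding W_def by (auto simp: scalar_prod_def intro!: sum.cong)
  have "(?A * (?B * N)) $$ (i, j) = (\<Sum>l<k - r. P $$ (r + l, i) * W $$ (r + l, j))"
    using ij N BN by (auto simp: scalar_prod_def intro!: sum.cong)
  also have "\<dots> = (\<Sum>a\<in>{r..<k}. P $$ (a, i) * W $$ (a, j))"
    using r by (intro sum.reindex_bij_witness[of _ "\<lambda>a. a - r" "\<lambda>l. r + l"]) auto
  also have "\<dots> = (\<Sum>a<k. P $$ (a, i) * W $$ (a, j))"
    using coords ij N unfolding W_def[symmetric] by (intro sum.mono_neutral_left) auto
  also have "\<dots> = N $$ (i, j)"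
    using ij N P W unfolding N_eq by (auto simp: scalar_prod_def intro!: sum.cong)
  finally show "(?A * (?B * N)) $$ (i, j) = N $$ (i, j)" .
qed (use N in auto)

text \<open>With \<open>C = P M\<^sup>T\<close> in row echelon form and invertible \<open>P\<close>, the rows of \<open>P\<close> beyond the
  pivot rows span the kernel of \<open>M\<close>, with coordinates read off through \<open>Q = P\<^sup>-\<^sup>1\<close>.\<close>
lemma kernel_retract_tail_rows:
  fixes M P Q C :: "'a::field mat"
  assumes M: "M \<in> carrier_mat k k" and P: "P \<in> carrier_mat k k" and Q: "Q \<in> carrier_mat k k"
    and PQ: "P * Q = 1\<^sub>m k" and QP: "Q * P = 1\<^sub>m k" and C: "C \<in> carrier_mat k k" and CT: "C\<^sup>T = M * P\<^sup>T"
    and r: "r \<le> k" and zero: "\<And>i j. r \<le> i \<Longrightarrow> i < k \<Longrightarrow> j < k \<Longrightarrow> C $$ (i, j) = 0"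
    and coords: "\<And>c W i j. W \<in> carrier_mat k c \<Longrightarrow> C\<^sup>T * W = 0\<^sub>m k c \<Longrightarrow> i < r \<Longrightarrow> j < c \<Longrightarrow> W $$ (i, j) = 0"
  shows "kernel_retract M k (k - r) (mat k (k - r) (\<lambda>(i, l). P $$ (r + l, i))) (mat (k - r) k (\<lambda>(l, j). Q $$ (j, r + l)))"
    (is "kernel_retract M k (k - r) ?A ?B")
proof -
  have PTQT: "P\<^sup>T * Q\<^sup>T = 1\<^sub>m k" using transpose_mult[OF Q P] QP by simp
  have "?B * ?A = 1\<^sub>m (k - r)"
  proof (rule eq_matI)
    fix l l' assume ll: "l < dim_row (1\<^sub>m (k - r))" "l' < dim_col (1\<^sub>m (k - r))"
    have "(?B * ?A) $$ (l, l') = (P * Q) $$ (r + l', r + l)"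
      using ll P Q by (auto simp: scalar_prod_def mult.commute intro!: sum.cong)
    then show "(?B * ?A) $$ (l, l') = 1\<^sub>m (k - r) $$ (l, l')" using ll r unfolding PQ by auto
  qed auto
  moreover have "M * ?A = 0\<^sub>m k (k - r)"
  proof (rule eq_matI)
    fix i l assume il: "i < dim_row (0\<^sub>m k (k - r))" "l < dim_col (0\<^sub>m k (k - r))"
    have "(M * ?A) $$ (i, l) = C\<^sup>T $$ (i, r + l)"
      using il M P unfolding CT by (auto simp: scalar_prod_def intro!: sum.cong)
    then show "(M * ?A) $$ (i, l) = 0\<^sub>m k (k - r) $$ (i, l)" using il C zero by auto
  qed (use M in auto)
  moreover have "?A * (?B * N) = N" if N: "N \<in> carrier_mat k c" and MN: "M * N = 0\<^sub>m k c" for c N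
  proof (rule tail_rows_section[OF P Q PTQT N r])
    have "C\<^sup>T * (Q\<^sup>T * N) = M * (P\<^sup>T * Q\<^sup>T) * N"
      unfolding CT using M P Q N by (simp add: assoc_mult_mat_dim)
    then show "(Q\<^sup>T * N) $$ (i, j) = 0" if "i < r" "j < c" for i j
      using coords[of "Q\<^sup>T * N" c i j] that PTQT MN M N Q by simp
  qed
  ultimately show ?thesis unfolding kernel_retract_def by auto
qed

lemma kernel_retract_exists:
  fixes M :: "'a::field mat"
  assumes M: "M \<in> carrier_mat k k"
  shows "\<exists>r A B. kernel_retract M k r A B"
proof -
  have MT: "M\<^sup>T \<in> carrier_mat k k" using M by simp
  note gj = gauss_jordan_single[OF MT refl]
  define C where "C = gauss_jordan_single M\<^sup>T"
  obtain P Q where CP: "C = P * M\<^sup>T" and P: "P \<in> carrier_mat k k"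
    and Q: "Q \<in> carrier_mat k k" and PQ: "P * Q = 1\<^sub>m k" and QP: "Q * P = 1\<^sub>m k"
    using gj(4) unfolding C_def by blast
  have C: "C \<in> carrier_mat k k" unfolding C_def by (rule gj(2))
  obtain f where pf: "pivot_fun C f k" using gj(3) C unfolding C_def row_echelon_form_def by auto
  obtain r where r: "r \<le> k" and piv: "\<And>i. i < r \<Longrightarrow> f i < k"
    and zero: "\<And>i j. r \<le> i \<Longrightarrow> i < k \<Longrightarrow> j < k \<Longrightarrow> C $$ (i, j) = 0"
    using echelon_pivot_prefix[OF C pf] by blast
  have CT: "C\<^sup>T = M * P\<^sup>T" unfolding CP using transpose_mult[OF P MT] by simp
  have "kernel_retract M k (k - r) (mat k (k - r) (\<lambda>(i, l). P $$ (r + l, i))) (mat (k - r) k (\<lambda>(l, j). Q $$ (j, r + l)))"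
    using pivot_coordinate_zero[OF C pf] piv r
    by (intro kernel_retract_tail_rows[OF M P Q PQ QP C CT r zero]) (auto simp: order.strict_trans2)
  then show ?thesis by blast
qed

lemma kernel_retract_carrier:
  assumes "kernel_retract T k r A B"
  shows "A \<in> carrier_mat k r" "B \<in> carrier_mat r k" "B * A = 1\<^sub>m r" "T * A = 0\<^sub>m k r"
  using assms unfolding kernel_retract_def by auto

lemma kernel_retract_section:
  "kernel_retract T k r A B \<Longrightarrow> N \<in> carrier_mat k c \<Longrightarrow> T * N = 0\<^sub>m k c \<Longrightarrow> A * (B * N) = N"
  unfolding kernel_retract_def by blast

lemma kernel_retract_compress_mult:
  assumes R: "kernel_retract T k r A B"
    and B1: "B1 \<in> carrier_mat r1 k1" and M: "M \<in> carrier_mat k1 k" and N: "N \<in> carrier_mat k k3"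
    and A3: "A3 \<in> carrier_mat k3 r3" and TN: "T * (N * A3) = 0\<^sub>m k r3"
  shows "(B1 * M * A) * (B * N * A3) = B1 * (M * N) * A3"
proof -
  note A = kernel_retract_carrier(1)[OF R] and B = kernel_retract_carrier(2)[OF R]
  have NA3: "N * A3 \<in> carrier_mat k r3" using N A3 by simp
  have "(B1 * M * A) * (B * N * A3) = B1 * M * (A * (B * (N * A3)))"
    using B1 M A B N A3 by (simp add: assoc_mult_mat_dim)
  also have "A * (B * (N * A3)) = N * A3" by (rule kernel_retract_section[OF R NA3 TN])
  finally show ?thesis using B1 M N A3 by (simp add: assoc_mult_mat_dim)
qed

lemma intertwining_kernel:
  assumes T': "T' \<in> carrier_mat k' k'" and M: "M \<in> carrier_mat k' k" and T: "T \<in> carrier_mat k k"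
    and N: "N \<in> carrier_mat k c" and TM: "T' * M = M * T" and TN: "T * N = 0\<^sub>m k c"
  shows "T' * (M * N) = 0\<^sub>m k' c"
proof -
  have "T' * (M * N) = M * (T * N)"
    using assoc_mult_mat[OF T' M N] assoc_mult_mat[OF M T N] TM by simp
  then show ?thesis using TN M by simp
qed

definition mat_sum :: "nat \<Rightarrow> nat \<Rightarrow> 'b set \<Rightarrow> ('b \<Rightarrow> 'a::comm_ring_1 mat) \<Rightarrow> 'a mat" where
  "mat_sum r c S f = mat r c (\<lambda>(i, j). \<Sum>a\<in>S. f a $$ (i, j))"

lemma mat_sum_carrier [simp]: "mat_sum r c S f \<in> carrier_mat r c"
  and mat_sum_dims [simp]: "dim_row (mat_sum r c S f) = r" "dim_col (mat_sum r c S f) = c"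
  unfolding mat_sum_def by auto

lemma index_mat_sum [simp]: "i < r \<Longrightarrow> j < c \<Longrightarrow> mat_sum r c S f $$ (i, j) = (\<Sum>a\<in>S. f a $$ (i, j))"
  unfolding mat_sum_def by auto

lemma mat_sum_cong: "(\<And>a. a \<in> S \<Longrightarrow> f a = g a) \<Longrightarrow> mat_sum r c S f = mat_sum r c S g"
  unfolding mat_sum_def by (auto intro!: sum.cong)

lemma mat_sum_empty: "mat_sum r c {} f = 0\<^sub>m r c"
  and mat_sum_singleton: "f a \<in> carrier_mat r c \<Longrightarrow> mat_sum r c {a} f = f a"
  and mat_sum_insert: "finite S \<Longrightarrow> a \<notin> S \<Longrightarrow> f a \<in> carrier_mat r c \<Longrightarrow>
    mat_sum r c (insert a S) f = f a + mat_sum r c S f"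
  and mat_sum_zero: "(\<And>a. a \<in> S \<Longrightarrow> f a = 0\<^sub>m r c) \<Longrightarrow> mat_sum r c S f = 0\<^sub>m r c"
  unfolding mat_sum_def by (auto intro!: eq_matI)

lemma mat_sum_reindex: "inj_on h S \<Longrightarrow> mat_sum r c (h ` S) f = mat_sum r c S (f \<circ> h)"
  unfolding mat_sum_def by (auto intro!: eq_matI simp: sum.reindex)

lemma mat_sum_swap:
  "mat_sum r c A (\<lambda>a. mat_sum r c B (f a)) = mat_sum r c B (\<lambda>b. mat_sum r c A (\<lambda>a. f a b))"
  unfolding mat_sum_def by (auto intro!: eq_matI simp: sum.swap[of _ A])

lemma mat_sum_Sigma:
  assumes "finite A" "\<forall>a\<in>A. finite (B a)"
  shows "mat_sum r c (Sigma A B) f = mat_sum r c A (\<lambda>a. mat_sum r c (B a) (\<lambda>b. f (a, b)))"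
  unfolding mat_sum_def using sum.Sigma[OF assms, of "\<lambda>a b. f (a, b) $$ _"]
  by (auto intro!: eq_matI simp: split_def)

lemma mult_mat_sum_left:
  assumes A: "A \<in> carrier_mat p r" and f: "\<And>a. a \<in> S \<Longrightarrow> f a \<in> carrier_mat r c"
  shows "A * mat_sum r c S f = mat_sum p c S (\<lambda>a. A * f a)"
proof (rule eq_matI)
  fix i j assume ij: "i < dim_row (mat_sum p c S (\<lambda>a. A * f a))" "j < dim_col (mat_sum p c S (\<lambda>a. A * f a))"
  have "(A * mat_sum r c S f) $$ (i, j) = (\<Sum>k<r. A $$ (i, k) * (\<Sum>a\<in>S. f a $$ (k, j)))"
    using ij A by (auto simp: scalar_prod_def intro!: sum.cong)
  also have "\<dots> = (\<Sum>a\<in>S. \<Sum>k<r. A $$ (i, k) * f a $$ (k, j))"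
    by (simp add: sum_distrib_left sum.swap[of _ S])
  also have "\<dots> = (\<Sum>a\<in>S. (A * f a) $$ (i, j))"
  proof (intro sum.cong refl)
    fix a assume "a \<in> S"
    with f[OF this] A ij show "(\<Sum>k<r. A $$ (i, k) * f a $$ (k, j)) = (A * f a) $$ (i, j)"
      by (auto simp: scalar_prod_def intro!: sum.cong)
  qed
  finally show "(A * mat_sum r c S f) $$ (i, j) = mat_sum p c S (\<lambda>a. A * f a) $$ (i, j)"
    using ij by simp
qed (use A in auto)

lemma mult_mat_sum_right:
  assumes B: "B \<in> carrier_mat c q" and f: "\<And>a. a \<in> S \<Longrightarrow> f a \<in> carrier_mat r c"
  shows "mat_sum r c S f * B = mat_sum r q S (\<lambda>a. f a * B)"
proof (rule eq_matI)
  fix i j assume ij: "i < dim_row (mat_sum r q S (\<lambda>a. f a * B))" "j < dim_col (mat_sum r q S (\<lambda>a. f a * B))"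
  have "(mat_sum r c S f * B) $$ (i, j) = (\<Sum>k<c. (\<Sum>a\<in>S. f a $$ (i, k)) * B $$ (k, j))"
    using ij B by (auto simp: scalar_prod_def intro!: sum.cong)
  also have "\<dots> = (\<Sum>a\<in>S. \<Sum>k<c. f a $$ (i, k) * B $$ (k, j))"
    by (simp add: sum_distrib_right sum.swap[of _ S])
  also have "\<dots> = (\<Sum>a\<in>S. (f a * B) $$ (i, j))"
  proof (intro sum.cong refl)
    fix a assume "a \<in> S"
    with f[OF this] B ij show "(\<Sum>k<c. f a $$ (i, k) * B $$ (k, j)) = (f a * B) $$ (i, j)"
      by (auto simp: scalar_prod_def intro!: sum.cong)
  qed
  finally show "(mat_sum r c S f * B) $$ (i, j) = mat_sum r q S (\<lambda>a. f a * B) $$ (i, j)"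
    using ij by simp
qed (use B in auto)

lemma commute_pow_mat:
  fixes E P :: "'a::comm_ring_1 mat"
  assumes E: "E \<in> carrier_mat m m" and P: "P \<in> carrier_mat m m" and EP: "E * P = P * E"
  shows "E * (k \<cdot>\<^sub>m P ^\<^sub>m j) = (k \<cdot>\<^sub>m P ^\<^sub>m j) * E"
proof -
  have "E * P ^\<^sub>m j = P ^\<^sub>m j * E"
  proof (induction j)
    case (Suc j)
    have Pj: "P ^\<^sub>m j \<in> carrier_mat m m" using P by simp
    have "E * P ^\<^sub>m Suc j = (E * P ^\<^sub>m j) * P" using assoc_mult_mat[OF E Pj P] by simp
    also have "\<dots> = P ^\<^sub>m j * (E * P)" unfolding Suc using assoc_mult_mat[OF Pj E P] by simp
    also have "\<dots> = P ^\<^sub>m Suc j * E" unfolding EP using assoc_mult_mat[OF Pj P E] by simp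
    finally show ?case .
  qed (use E P in simp)
  moreover have Pj: "P ^\<^sub>m j \<in> carrier_mat m m" using P by simp
  ultimately show ?thesis unfolding mult_smult_distrib[OF E Pj] mult_smult_assoc_mat[OF Pj E] by simp
qed

lemma char_matrix_commute:
  fixes P :: "'a::field mat"
  assumes P: "P \<in> carrier_mat m m"
  shows "char_matrix P z * P = P * char_matrix P z"
proof -
  have D: "char_matrix P z = P + (-z) \<cdot>\<^sub>m 1\<^sub>m m" unfolding char_matrix_def using P by simp
  have "char_matrix P z * P = P * P + (-z) \<cdot>\<^sub>m P"
    unfolding D using add_mult_distrib_mat[OF P _ P, of "(-z) \<cdot>\<^sub>m 1\<^sub>m m"] P
    by (simp add: mult_smult_assoc_mat_dim)
  also have "\<dots> = P * char_matrix P z"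
    unfolding D using mult_add_distrib_mat[OF P P, of "(-z) \<cdot>\<^sub>m 1\<^sub>m m"] P
    by (simp add: mult_smult_distrib_dim)
  finally show ?thesis .
qed

lemma char_matrix_eq_zero:
  fixes P :: "'a::field mat"
  assumes P: "P \<in> carrier_mat m m" and D0: "char_matrix P z = 0\<^sub>m m m"
  shows "P = z \<cdot>\<^sub>m 1\<^sub>m m"
proof (rule eq_matI)
  fix i j assume ij: "i < dim_row (z \<cdot>\<^sub>m 1\<^sub>m m)" "j < dim_col (z \<cdot>\<^sub>m 1\<^sub>m m)"
  have "P $$ (i, j) + (-z) * (if i = j then 1 else 0) = 0"
    using arg_cong[OF D0, of "\<lambda>M. M $$ (i, j)"] ij P unfolding char_matrix_def by simp
  then show "P $$ (i, j) = (z \<cdot>\<^sub>m 1\<^sub>m m) $$ (i, j)" using ij by (auto split: if_splits)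
qed (use P in auto)

lemma col_mat_of_kernel_vec:
  fixes D :: "'a::comm_ring_1 mat"
  assumes D: "D \<in> carrier_mat m m" and v: "v \<in> carrier_vec m" "v \<noteq> 0\<^sub>v m" "D *\<^sub>v v = 0\<^sub>v m"
  shows "\<exists>N. N \<in> carrier_mat m 1 \<and> N \<noteq> 0\<^sub>m m 1 \<and> D * N = 0\<^sub>m m 1"
proof (intro exI conjI)
  let ?N = "mat m 1 (\<lambda>(i, _). v $ i)"
  show "?N \<in> carrier_mat m 1" by simp
  show "?N \<noteq> 0\<^sub>m m 1"
  proof
    assume N0: "?N = 0\<^sub>m m 1"
    have "v $ i = 0" if "i < m" for i
      using that arg_cong[OF N0, of "\<lambda>M. M $$ (i, 0)"] by simp
    then show False using v by (auto intro: eq_vecI)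
  qed
  show "D * ?N = 0\<^sub>m m 1"
  proof (rule eq_matI)
    fix i j assume ij: "i < dim_row (0\<^sub>m m 1 :: 'a mat)" "j < dim_col (0\<^sub>m m 1 :: 'a mat)"
    have "(D * ?N) $$ (i, j) = (D *\<^sub>v v) $ i"
      using ij D v(1) by (auto simp: scalar_prod_def intro!: sum.cong)
    then show "(D * ?N) $$ (i, j) = 0\<^sub>m m 1 $$ (i, j)" using v ij by simp
  qed (use D in auto)
qed

lemma singular_matrix_unit:
  assumes m2: "2 \<le> m"
  shows "\<exists>E N. E \<in> carrier_mat m m \<and> E \<noteq> 0\<^sub>m m m \<and> N \<in> carrier_mat m 1 \<and> N \<noteq> (0\<^sub>m m 1 :: 'a::comm_ring_1 mat) \<and>
    E * N = 0\<^sub>m m 1"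
proof (intro exI conjI)
  let ?E = "mat m m (\<lambda>(i, j). if i = 0 \<and> j = 0 then 1 else 0) :: 'a mat"
  let ?N = "mat m 1 (\<lambda>(i, _). if i = 1 then 1 else 0) :: 'a mat"
  show "?E \<in> carrier_mat m m" "?N \<in> carrier_mat m 1" by simp_all
  show "?E \<noteq> 0\<^sub>m m m"
  proof
    assume "?E = 0\<^sub>m m m"
    from arg_cong[OF this, of "\<lambda>M. M $$ (0, 0)"] show False using m2 by simp
  qed
  show "?N \<noteq> 0\<^sub>m m 1"
  proof
    assume "?N = 0\<^sub>m m 1"
    from arg_cong[OF this, of "\<lambda>M. M $$ (1, 0)"] show False using m2 by simp
  qed
  show "?E * ?N = 0\<^sub>m m 1"
    using m2 by (intro eq_matI) (auto simp: scalar_prod_def intro!: sum.neutral)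
qed

text \<open>Take \<open>P - z I\<close> for an eigenvalue \<open>z\<close> of \<open>P\<close>, or a matrix unit if \<open>P = z I\<close>.\<close>
lemma singular_commuting_mat_exists:
  fixes P :: "'a::field mat"
  assumes ac: "alg_closed_field TYPE('a)" and P: "P \<in> carrier_mat m m" and m2: "2 \<le> m"
  shows "\<exists>E N. E \<in> carrier_mat m m \<and> E * P = P * E \<and> E \<noteq> 0\<^sub>m m m \<and>
     N \<in> carrier_mat m 1 \<and> N \<noteq> 0\<^sub>m m 1 \<and> E * N = 0\<^sub>m m 1"
proof -
  have "degree (char_poly P) \<ge> 1" using degree_monic_char_poly[OF P] m2 by simp
  then obtain z where "poly (char_poly P) z = 0" using ac unfolding alg_closed_field_def by blast
  then obtain v where v: "v \<in> carrier_vec m" "v \<noteq> 0\<^sub>v m" "char_matrix P z *\<^sub>v v = 0\<^sub>v m"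
    using eigenvalue_root_char_poly[OF P] eigenvalue_char_matrix[OF P] by blast
  have D: "char_matrix P z \<in> carrier_mat m m" using P unfolding char_matrix_def by simp
  show ?thesis
  proof (cases "char_matrix P z = 0\<^sub>m m m")
    case False
    obtain N where N: "N \<in> carrier_mat m 1" "N \<noteq> 0\<^sub>m m 1" "char_matrix P z * N = 0\<^sub>m m 1"
      using col_mat_of_kernel_vec[OF D v] by blast
    show ?thesis
      using False D N char_matrix_commute[OF P, of z] by (intro exI[of _ "char_matrix P z"] exI[of _ N]) simp
  next
    case True
    obtain E N :: "'a mat" where E: "E \<in> carrier_mat m m" and EN: "E \<noteq> 0\<^sub>m m m" "N \<in> carrier_mat m 1"
      "N \<noteq> 0\<^sub>m m 1" "E * N = 0\<^sub>m m 1"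
      using singular_matrix_unit[OF m2] by blast
    have "E * P = P * E"
      unfolding char_matrix_eq_zero[OF P True] using E by (simp add: mult_smult_distrib_dim mult_smult_assoc_mat_dim)
    then show ?thesis using E EN by (intro exI[of _ E] exI[of _ N]) simp
  qed
qed

lemma conjugate_intertwining:
  fixes Ta Tia Tb Tib Tg W E :: "'a::comm_ring_1 mat"
  assumes Ta: "Ta \<in> carrier_mat m ka" and Tia: "Tia \<in> carrier_mat ka m" and TaTia: "Ta * Tia = 1\<^sub>m m"
    and Tb: "Tb \<in> carrier_mat m kb" and Tib: "Tib \<in> carrier_mat kb m" and TibTb: "Tib * Tb = 1\<^sub>m kb" and TbTib: "Tb * Tib = 1\<^sub>m m"
    and Tg: "Tg \<in> carrier_mat kb ka" and W: "W \<in> carrier_mat m m" and E: "E \<in> carrier_mat m m"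
    and TbTg: "Tb * Tg = W * Ta" and EW: "E * W = W * E"
  shows "Tg * (Tia * E * Ta) = (Tib * E * Tb) * Tg"
proof -
  have "Tg = (Tib * Tb) * Tg" unfolding TibTb using Tg by simp
  also have "\<dots> = Tib * W * Ta" using Tib Tb Tg W Ta TbTg by (simp add: assoc_mult_mat_dim)
  finally have Tg_eq: "Tg = Tib * W * Ta" .
  have "Tg * (Tia * E * Ta) = Tib * W * (Ta * Tia) * E * Ta"
    unfolding Tg_eq using Ta Tia Tib W E by (simp add: assoc_mult_mat_dim)
  also have "\<dots> = Tib * (E * W) * Ta"
    unfolding TaTia EW using Ta Tib W E by (simp add: assoc_mult_mat_dim)
  also have "\<dots> = Tib * E * (Tb * Tib) * W * Ta"
    unfolding TbTib using Ta Tib W E by (simp add: assoc_mult_mat_dim)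
  also have "\<dots> = (Tib * E * Tb) * Tg"
    unfolding Tg_eq using Ta Tb Tib W E by (simp add: assoc_mult_mat_dim)
  finally show ?thesis .
qed

lemma conjugate_mat_eq_zero:
  fixes T Ti E :: "'a::comm_ring_1 mat"
  assumes T: "T \<in> carrier_mat m k" and Ti: "Ti \<in> carrier_mat k m" and TTi: "T * Ti = 1\<^sub>m m"
    and E: "E \<in> carrier_mat m m" and zero: "Ti * E * T = 0\<^sub>m k k"
  shows "E = 0\<^sub>m m m"
proof -
  have "E = (T * Ti) * E * (T * Ti)" unfolding TTi using E by simp
  also have "\<dots> = T * (Ti * E * T) * Ti" using T Ti E by (simp add: assoc_mult_mat_dim)
  finally show ?thesis unfolding zero using T Ti by simp
qed

lemma conjugate_mat_kernel:
  fixes T Ti E N :: "'a::comm_ring_1 mat"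
  assumes T: "T \<in> carrier_mat m k" and Ti: "Ti \<in> carrier_mat k m" and TTi: "T * Ti = 1\<^sub>m m"
    and E: "E \<in> carrier_mat m m" and N: "N \<in> carrier_mat m c" "N \<noteq> 0\<^sub>m m c" and EN: "E * N = 0\<^sub>m m c"
  shows "Ti * N \<noteq> 0\<^sub>m k c" "Ti * E * T * (Ti * N) = 0\<^sub>m k c"
proof
  assume "Ti * N = 0\<^sub>m k c"
  then have "(T * Ti) * N = 0\<^sub>m m c" using assoc_mult_mat[OF T Ti N(1)] T by simp
  then show False using TTi N by simp
next
  have "Ti * E * T * (Ti * N) = Ti * E * (T * Ti) * N" using T Ti E N(1) by (simp add: assoc_mult_mat_dim)
  also have "\<dots> = Ti * (E * N)" unfolding TTi using Ti E N(1) by (simp add: assoc_mult_mat_dim)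
  finally show "Ti * E * T * (Ti * N) = 0\<^sub>m k c" unfolding EN using Ti by simp
qed

section \<open>Graded vector spaces\<close>

definition zero_hom :: "'x set \<Rightarrow> ('x \<Rightarrow> nat) \<Rightarrow> ('x \<Rightarrow> nat) \<Rightarrow> ('x \<Rightarrow> 'a::field mat)" where
  "zero_hom X d e = (\<lambda>x. if x \<in> X then 0\<^sub>m (e x) (d x) else 0\<^sub>m 0 0)"

definition hom_sum :: "'x set \<Rightarrow> ('x \<Rightarrow> nat) \<Rightarrow> ('x \<Rightarrow> nat) \<Rightarrow> 'b set \<Rightarrow>
    ('b \<Rightarrow> 'x \<Rightarrow> 'a::field mat) \<Rightarrow> ('x \<Rightarrow> 'a mat)" where
  "hom_sum X d e S f = (\<lambda>x. if x \<in> X then mat_sum (e x) (d x) S (\<lambda>a. f a x) else 0\<^sub>m 0 0)"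

lemma graded_eqI: "(\<And>y. y \<in> Y \<Longrightarrow> f y = g y) \<Longrightarrow> (\<And>y. y \<notin> Y \<Longrightarrow> f y = g y) \<Longrightarrow> f = g"
  by (rule ext) blast

lemma objs_outside: "d \<in> objs X \<Longrightarrow> x \<notin> X \<Longrightarrow> d x = 0"
  unfolding objs_def by auto

lemma homsI:
  "(\<And>x. x \<in> X \<Longrightarrow> f x \<in> carrier_mat (e x) (d x)) \<Longrightarrow> (\<And>x. x \<notin> X \<Longrightarrow> f x = 0\<^sub>m 0 0) \<Longrightarrow> f \<in> homs X d e"
  unfolding homs_def by blast

lemma homsD: "f \<in> homs X d e \<Longrightarrow> x \<in> X \<Longrightarrow> f x \<in> carrier_mat (e x) (d x)"
  and homs_outside: "f \<in> homs X d e \<Longrightarrow> x \<notin> X \<Longrightarrow> f x = 0\<^sub>m 0 0"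
  unfolding homs_def by auto

lemma homs_carrier_mat: "d \<in> objs X \<Longrightarrow> e \<in> objs X \<Longrightarrow> f \<in> homs X d e \<Longrightarrow> f x \<in> carrier_mat (e x) (d x)"
  unfolding objs_def homs_def by (cases "x \<in> X") auto

lemma zero_hom_homs [simp]: "zero_hom X d e \<in> homs X d e"
  and idm_homs [simp]: "idm X d \<in> homs X d d"
  and hom_sum_homs [simp]: "hom_sum X d e S f \<in> homs X d e"
  unfolding zero_hom_def idm_def hom_sum_def homs_def by auto

lemma cmp_homs: "f \<in> homs X d e \<Longrightarrow> f' \<in> homs X e k \<Longrightarrow> cmp X f' f \<in> homs X d k"
  by (rule homsI, unfold cmp_def, auto dest!: homsD)

lemma addm_homs: "f \<in> homs X d e \<Longrightarrow> f' \<in> homs X d e \<Longrightarrow> addm X f f' \<in> homs X d e"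
  by (rule homsI, unfold addm_def, auto dest!: homsD)

lemma smultm_homs: "f \<in> homs X d e \<Longrightarrow> smultm X c f \<in> homs X d e"
  by (rule homsI, unfold smultm_def, auto dest!: homsD)

lemma cmp_at: "y \<in> Y \<Longrightarrow> cmp Y f g y = f y * g y"
  and idm_at: "y \<in> Y \<Longrightarrow> idm Y d y = 1\<^sub>m (d y)"
  and addm_at: "y \<in> Y \<Longrightarrow> addm Y f g y = f y + g y"
  and smultm_at: "y \<in> Y \<Longrightarrow> smultm Y c f y = c \<cdot>\<^sub>m f y"
  and hom_sum_at: "y \<in> Y \<Longrightarrow> hom_sum Y d e S h y = mat_sum (e y) (d y) S (\<lambda>a. h a y)"
  unfolding cmp_def idm_def addm_def smultm_def hom_sum_def by simp_all

lemma smultm_zero: "f \<in> homs X d e \<Longrightarrow> smultm X 0 f = zero_hom X d e"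
  unfolding smultm_def zero_hom_def by (auto intro!: ext simp: zero_smult_mat dest!: homsD)

lemma hom_sum_empty: "hom_sum X d e {} f = zero_hom X d e"
  unfolding hom_sum_def zero_hom_def by (auto intro!: ext simp: mat_sum_empty)

lemma hom_sum_insert: "finite S \<Longrightarrow> a \<notin> S \<Longrightarrow> f a \<in> homs X d e \<Longrightarrow>
    hom_sum X d e (insert a S) f = addm X (f a) (hom_sum X d e S f)"
  unfolding hom_sum_def addm_def by (auto intro!: ext mat_sum_insert dest: homsD)

context
  fixes X :: "'x set" and Y :: "'y set" and Fo :: "('x \<Rightarrow> nat) \<Rightarrow> ('y \<Rightarrow> nat)"
    and Fm :: "('x \<Rightarrow> 'a::field mat) \<Rightarrow> ('y \<Rightarrow> 'a mat)"
  assumes LF: "linear_functor X Y Fo Fm"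
begin

lemma linear_functor_obj: "d \<in> objs X \<Longrightarrow> Fo d \<in> objs Y"
  and linear_functor_hom: "d \<in> objs X \<Longrightarrow> e \<in> objs X \<Longrightarrow> f \<in> homs X d e \<Longrightarrow> Fm f \<in> homs Y (Fo d) (Fo e)"
  and linear_functor_idm: "d \<in> objs X \<Longrightarrow> Fm (idm X d) = idm Y (Fo d)"
  and linear_functor_cmp: "d \<in> objs X \<Longrightarrow> e \<in> objs X \<Longrightarrow> k \<in> objs X \<Longrightarrow> f \<in> homs X d e \<Longrightarrow>
    f' \<in> homs X e k \<Longrightarrow> Fm (cmp X f' f) = cmp Y (Fm f') (Fm f)"
  and linear_functor_addm: "d \<in> objs X \<Longrightarrow> e \<in> objs X \<Longrightarrow> f \<in> homs X d e \<Longrightarrow> f' \<in> homs X d e \<Longrightarrow>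
    Fm (addm X f f') = addm Y (Fm f) (Fm f')"
  and linear_functor_smultm: "d \<in> objs X \<Longrightarrow> e \<in> objs X \<Longrightarrow> f \<in> homs X d e \<Longrightarrow>
    Fm (smultm X c f) = smultm Y c (Fm f)"
  using LF unfolding linear_functor_def by blast+

lemma linear_functor_zero_hom:
  assumes d: "d \<in> objs X" and e: "e \<in> objs X"
  shows "Fm (zero_hom X d e) = zero_hom Y (Fo d) (Fo e)"
proof -
  have "Fm (zero_hom X d e) = Fm (smultm X 0 (zero_hom X d e))" by (simp add: smultm_zero[OF zero_hom_homs])
  also have "\<dots> = smultm Y 0 (Fm (zero_hom X d e))" by (rule linear_functor_smultm[OF d e zero_hom_homs])
  also have "\<dots> = zero_hom Y (Fo d) (Fo e)" by (rule smultm_zero[OF linear_functor_hom[OF d e zero_hom_homs]])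
  finally show ?thesis .
qed

lemma linear_functor_hom_sum:
  assumes S: "finite S" and d: "d \<in> objs X" and e: "e \<in> objs X"
    and f: "\<And>a. a \<in> S \<Longrightarrow> f a \<in> homs X d e"
  shows "Fm (hom_sum X d e S f) = hom_sum Y (Fo d) (Fo e) S (\<lambda>a. Fm (f a))"
  using S f
proof (induction S rule: finite_induct)
  case empty
  then show ?case by (simp add: hom_sum_empty linear_functor_zero_hom[OF d e])
next
  case (insert a S)
  then have fa: "f a \<in> homs X d e" by simp
  have "Fm (hom_sum X d e (insert a S) f) = addm Y (Fm (f a)) (Fm (hom_sum X d e S f))"
    using insert by (simp add: hom_sum_insert linear_functor_addm[OF d e])
  also have "\<dots> = hom_sum Y (Fo d) (Fo e) (insert a S) (\<lambda>a. Fm (f a))"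
    using insert linear_functor_hom[OF d e fa] by (simp add: hom_sum_insert)
  finally show ?case .
qed

end

definition hom_dom :: "'x set \<Rightarrow> ('x \<Rightarrow> 'a mat) \<Rightarrow> ('x \<Rightarrow> nat)" where
  "hom_dom X f = (\<lambda>x. if x \<in> X then dim_col (f x) else 0)"

definition hom_cod :: "'x set \<Rightarrow> ('x \<Rightarrow> 'a mat) \<Rightarrow> ('x \<Rightarrow> nat)" where
  "hom_cod X f = (\<lambda>x. if x \<in> X then dim_row (f x) else 0)"

lemma hom_dom_cod: "f \<in> homs X d e \<Longrightarrow> d \<in> objs X \<Longrightarrow> e \<in> objs X \<Longrightarrow> hom_dom X f = d \<and> hom_cod X f = e"
proof -
  assume f: "f \<in> homs X d e" and d: "d \<in> objs X" and e: "e \<in> objs X"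
  have "hom_dom X f x = d x \<and> hom_cod X f x = e x" for x
    using homsD[OF f, of x] objs_outside[OF d, of x] objs_outside[OF e, of x]
    unfolding hom_dom_def hom_cod_def by (cases "x \<in> X") auto
  then show ?thesis by auto
qed

section \<open>The action of the cyclic group\<close>

lemma shift_invariant_multiples:
  fixes n h0 q :: nat
  assumes shift: "\<And>a b. a < n \<Longrightarrow> b < n \<Longrightarrow> St b \<Longrightarrow> St ((a + b) mod n) \<longleftrightarrow> St a"
    and h0: "St h0" "h0 < n" and q: "q * h0 < n"
  shows "St (q * h0)"
  using q
proof (induction q)
  case 0
  then show ?case using shift[of 0 h0] h0 by simp
next
  case (Suc q)
  then have "q * h0 < n" by (simp add: order.strict_trans1)
  then show ?case using Suc shift[of h0 "q * h0"] h0 by (simp add: add.commute)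
qed

lemma shift_invariant_dvd:
  fixes n h0 k :: nat
  assumes shift: "\<And>a b. a < n \<Longrightarrow> b < n \<Longrightarrow> St b \<Longrightarrow> St ((a + b) mod n) \<longleftrightarrow> St a"
    and h0: "0 < h0" "St h0" "h0 < n" and least: "\<And>h. 0 < h \<Longrightarrow> h < h0 \<Longrightarrow> \<not> St h"
    and k: "St k" "k < n"
  shows "h0 dvd k"
proof -
  have qn: "k div h0 * h0 < n" using k(2) div_times_less_eq_dividend[of k h0] by linarith
  have rn: "k mod h0 < n" using mod_less_divisor[OF h0(1), of k] h0(3) by linarith
  have "St ((k mod h0 + k div h0 * h0) mod n) \<longleftrightarrow> St (k mod h0)"
    by (rule shift[OF rn qn shift_invariant_multiples[OF shift h0(2,3) qn]])
  then have "St (k mod h0)" using k by simp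
  then show ?thesis using least[of "k mod h0"] h0(1) by (auto simp: dvd_eq_mod_eq_0)
qed

lemma is_Psi_nonzero: "is_Psi n \<omega> X act \<Psi> \<Longrightarrow> g < n \<Longrightarrow> h < n \<Longrightarrow> x \<in> X \<Longrightarrow> \<Psi> g h x \<noteq> 0"
  and is_Psi_zero_zero: "is_Psi n \<omega> X act \<Psi> \<Longrightarrow> 0 < n \<Longrightarrow> x \<in> X \<Longrightarrow> \<Psi> 0 0 x = 1"
  unfolding is_Psi_def by blast+

lemma ginv_lt: "1 \<le> n \<Longrightarrow> ginv n g < n"
  unfolding ginv_def by auto

lemma ginv_add_mod: "1 \<le> n \<Longrightarrow> g < n \<Longrightarrow> (ginv n g + g) mod n = 0"
  unfolding ginv_def by (cases "g = 0") (auto simp: mod_add_left_eq)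

lemma add_ginv_mod: "1 \<le> n \<Longrightarrow> g < n \<Longrightarrow> (g + ginv n g) mod n = 0"
  using ginv_add_mod by (simp add: add.commute)

lemma add_ginv_add_mod: "1 \<le> n \<Longrightarrow> a < n \<Longrightarrow> m < n \<Longrightarrow> (a + (ginv n a + m) mod n) mod n = m"
proof -
  assume n1: "1 \<le> n" and a: "a < n" and m: "m < n"
  have "(a + (ginv n a + m) mod n) mod n = ((a + ginv n a) mod n + m) mod n"
    by (simp add: mod_add_right_eq mod_add_left_eq add.assoc)
  then show ?thesis using add_ginv_mod[OF n1 a] m by simp
qed

context
  fixes n :: nat and X :: "'x set" and act :: "nat \<Rightarrow> 'x \<Rightarrow> 'x"
  assumes n1: "1 \<le> n" and GS: "is_Gset n X act"
begin

lemma act_closed: "g < n \<Longrightarrow> x \<in> X \<Longrightarrow> act g x \<in> X"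
  and act_zero: "x \<in> X \<Longrightarrow> act 0 x = x"
  and act_add: "g < n \<Longrightarrow> h < n \<Longrightarrow> x \<in> X \<Longrightarrow> act ((g + h) mod n) x = act g (act h x)"
  using GS unfolding is_Gset_def by auto

lemma ginv_act: "g < n \<Longrightarrow> x \<in> X \<Longrightarrow> act (ginv n g) (act g x) = x"
  and act_ginv: "g < n \<Longrightarrow> x \<in> X \<Longrightarrow> act g (act (ginv n g) x) = x"
  and ginv_act_closed: "g < n \<Longrightarrow> x \<in> X \<Longrightarrow> act (ginv n g) x \<in> X"
  using act_add[of "ginv n g" g x] act_add[of g "ginv n g" x] act_closed[of "ginv n g" x]
    ginv_lt[OF n1] ginv_add_mod[OF n1] add_ginv_mod[OF n1] act_zero
  by auto

lemma act_inj: "g < n \<Longrightarrow> x \<in> X \<Longrightarrow> z \<in> X \<Longrightarrow> act g x = act g z \<Longrightarrow> x = z"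
  by (metis ginv_act)

lemma ginv_add_act: "g < n \<Longrightarrow> h < n \<Longrightarrow> x \<in> X \<Longrightarrow>
    act (ginv n ((g + h) mod n)) x = act (ginv n h) (act (ginv n g) x)"
proof -
  assume g: "g < n" and h: "h < n" and x: "x \<in> X"
  let ?z = "act (ginv n h) (act (ginv n g) x)"
  have z: "?z \<in> X" using ginv_act_closed g h x by auto
  have gh: "(g + h) mod n < n" using n1 by simp
  have "act ((g + h) mod n) ?z = x"
    using act_add[OF g h z] act_ginv ginv_act_closed g h x by auto
  then show ?thesis using ginv_act[OF gh z] by metis
qed

lemma gobj_objs [simp]: "gobj n X act g d \<in> objs X"
  unfolding gobj_def objs_def by auto

lemma gobj_at: "x \<in> X \<Longrightarrow> gobj n X act g d x = d (act (ginv n g) x)"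
  and gmor_at: "x \<in> X \<Longrightarrow> gmor n X act g f x = f (act (ginv n g) x)"
  unfolding gobj_def gmor_def by auto

lemma gobj_gobj: "g < n \<Longrightarrow> h < n \<Longrightarrow>
    gobj n X act g (gobj n X act h d) = gobj n X act ((g + h) mod n) d"
  unfolding gobj_def by (auto intro!: ext simp: ginv_add_act ginv_act_closed)

lemma gmor_homs: "g < n \<Longrightarrow> f \<in> homs X d e \<Longrightarrow> gmor n X act g f \<in> homs X (gobj n X act g d) (gobj n X act g e)"
  unfolding homs_def gmor_def gobj_def using ginv_act_closed by auto

lemma gobj_simple_obj: "g < n \<Longrightarrow> x \<in> X \<Longrightarrow> gobj n X act g (simple_obj x) = simple_obj (act g x)"
  unfolding gobj_def simple_obj_def by (auto intro!: ext simp: ginv_act act_ginv act_closed)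

end

section \<open>Decomposition into simple objects\<close>

definition summand_incl :: "'x set \<Rightarrow> ('x \<Rightarrow> nat) \<Rightarrow> 'x \<Rightarrow> nat \<Rightarrow> ('x \<Rightarrow> 'a::field mat)" where
  "summand_incl X d x j = (\<lambda>z. if z \<in> X then
     (if z = x then mat (d x) 1 (\<lambda>(i, _). if i = j then 1 else 0) else 0\<^sub>m (d z) 0) else 0\<^sub>m 0 0)"

definition summand_proj :: "'x set \<Rightarrow> ('x \<Rightarrow> nat) \<Rightarrow> 'x \<Rightarrow> nat \<Rightarrow> ('x \<Rightarrow> 'a::field mat)" where
  "summand_proj X d x j = (\<lambda>z. if z \<in> X then
     (if z = x then mat 1 (d x) (\<lambda>(_, i). if i = j then 1 else 0) else 0\<^sub>m 0 (d z)) else 0\<^sub>m 0 0)"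

lemma simple_obj_objs: "x \<in> X \<Longrightarrow> simple_obj x \<in> objs X"
  unfolding objs_def simple_obj_def by auto

lemma summand_incl_homs: "x \<in> X \<Longrightarrow> summand_incl X d x j \<in> homs X (simple_obj x) d"
  and summand_proj_homs: "x \<in> X \<Longrightarrow> summand_proj X d x j \<in> homs X d (simple_obj x)"
  by (rule homsI, auto simp: summand_incl_def summand_proj_def simple_obj_def)+

lemma summand_incl_simple_obj: "x \<in> X \<Longrightarrow> summand_incl X (simple_obj x) x 0 = idm X (simple_obj x)"
  and summand_proj_simple_obj: "x \<in> X \<Longrightarrow> summand_proj X (simple_obj x) x 0 = idm X (simple_obj x)"
  unfolding summand_incl_def summand_proj_def idm_def simple_obj_def by (auto intro!: ext eq_matI)

lemma Sigma_simple_obj: "x \<in> X \<Longrightarrow> Sigma X (\<lambda>z. {..<simple_obj x z}) = {(x, 0)}"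
  unfolding simple_obj_def by (auto split: if_splits)

lemma mult_unit_col_mat:
  assumes A: "A \<in> carrier_mat e d" and j: "j < d"
  shows "A * mat d 1 (\<lambda>(i, _). if i = j then 1 else 0)
    = mat_sum e 1 {..<e} (\<lambda>i. A $$ (i, j) \<cdot>\<^sub>m mat e 1 (\<lambda>(r, _). if r = i then 1 else 0))"
proof (rule eq_matI)
  fix r c assume "r < dim_row (mat_sum e 1 {..<e} (\<lambda>i. A $$ (i, j) \<cdot>\<^sub>m mat e 1 (\<lambda>(r, _). if r = i then 1 else 0)))"
    "c < dim_col (mat_sum e 1 {..<e} (\<lambda>i. A $$ (i, j) \<cdot>\<^sub>m mat e 1 (\<lambda>(r, _). if r = i then 1 else 0)))"
  then have r: "r < e" and c: "c = 0" by auto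
  have "(A * mat d 1 (\<lambda>(i, _). if i = j then 1 else 0)) $$ (r, c) = (\<Sum>k<d. A $$ (r, k) * (if k = j then 1 else 0))"
    using A r c by (auto simp: scalar_prod_def intro!: sum.cong)
  also have "\<dots> = (\<Sum>i<e. (A $$ (i, j) \<cdot>\<^sub>m mat e 1 (\<lambda>(r, _). if r = i then 1 else 0)) $$ (r, c))"
    using j r c by (simp add: if_distrib[of "\<lambda>t. _ * t"] cong: if_cong)
  finally show "(A * mat d 1 (\<lambda>(i, _). if i = j then 1 else 0)) $$ (r, c)
    = mat_sum e 1 {..<e} (\<lambda>i. A $$ (i, j) \<cdot>\<^sub>m mat e 1 (\<lambda>(r, _). if r = i then 1 else 0)) $$ (r, c)"
    using r c by simp
qed (use A in auto)

lemma unit_row_mult_mat: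
  assumes A: "A \<in> carrier_mat e d" and i: "i < e"
  shows "mat 1 e (\<lambda>(_, k). if k = i then 1 else 0) * A
    = mat_sum 1 d {..<d} (\<lambda>j. A $$ (i, j) \<cdot>\<^sub>m mat 1 d (\<lambda>(_, c). if c = j then 1 else 0))"
proof (rule eq_matI)
  fix r c assume "r < dim_row (mat_sum 1 d {..<d} (\<lambda>j. A $$ (i, j) \<cdot>\<^sub>m mat 1 d (\<lambda>(_, c). if c = j then 1 else 0)))"
    "c < dim_col (mat_sum 1 d {..<d} (\<lambda>j. A $$ (i, j) \<cdot>\<^sub>m mat 1 d (\<lambda>(_, c). if c = j then 1 else 0)))"
  then have r: "r = 0" and c: "c < d" by auto
  have "(mat 1 e (\<lambda>(_, k). if k = i then 1 else 0) * A) $$ (r, c) = (\<Sum>k<e. (if k = i then 1 else 0) * A $$ (k, c))"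
    using A r c by (auto simp: scalar_prod_def intro!: sum.cong)
  also have "\<dots> = (\<Sum>j<d. (A $$ (i, j) \<cdot>\<^sub>m mat 1 d (\<lambda>(_, c). if c = j then 1 else 0)) $$ (r, c))"
    using i r c by (simp add: if_distrib[of "\<lambda>t. t * _"] if_distrib[of "\<lambda>t. _ * t"] cong: if_cong)
  finally show "(mat 1 e (\<lambda>(_, k). if k = i then 1 else 0) * A) $$ (r, c)
    = mat_sum 1 d {..<d} (\<lambda>j. A $$ (i, j) \<cdot>\<^sub>m mat 1 d (\<lambda>(_, c). if c = j then 1 else 0)) $$ (r, c)"
    using r c by simp
qed (use A in auto)

lemma cmp_summand_incl:
  assumes f: "f \<in> homs X d e" and x: "x \<in> X" and j: "j < d x"
  shows "cmp X f (summand_incl X d x j)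
    = hom_sum X (simple_obj x) e {..<e x} (\<lambda>i. smultm X (f x $$ (i, j)) (summand_incl X e x i))"
proof (rule graded_eqI)
  fix z assume z: "z \<in> X"
  show "cmp X f (summand_incl X d x j) z
    = hom_sum X (simple_obj x) e {..<e x} (\<lambda>i. smultm X (f x $$ (i, j)) (summand_incl X e x i)) z"
  proof (cases "z = x")
    case True
    then show ?thesis
      using mult_unit_col_mat[OF homsD[OF f x] j] z
      unfolding cmp_def hom_sum_def summand_incl_def smultm_def simple_obj_def by simp
  qed (use z homsD[OF f z] in \<open>auto intro!: eq_matI simp: cmp_def hom_sum_def summand_incl_def smultm_def simple_obj_def\<close>)
qed (simp add: cmp_def hom_sum_def)

lemma summand_proj_cmp:
  assumes f: "f \<in> homs X d e" and x: "x \<in> X" and i: "i < e x"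
  shows "cmp X (summand_proj X e x i) f
    = hom_sum X d (simple_obj x) {..<d x} (\<lambda>j. smultm X (f x $$ (i, j)) (summand_proj X d x j))"
proof (rule graded_eqI)
  fix z assume z: "z \<in> X"
  show "cmp X (summand_proj X e x i) f z
    = hom_sum X d (simple_obj x) {..<d x} (\<lambda>j. smultm X (f x $$ (i, j)) (summand_proj X d x j)) z"
  proof (cases "z = x")
    case True
    then show ?thesis
      using unit_row_mult_mat[OF homsD[OF f x] i] z
      unfolding cmp_def hom_sum_def summand_proj_def smultm_def simple_obj_def by simp
  qed (use z homsD[OF f z] in \<open>auto intro!: eq_matI simp: cmp_def hom_sum_def summand_proj_def smultm_def simple_obj_def\<close>)
qed (simp add: cmp_def hom_sum_def)

lemma idm_summand_decomp:
  assumes fin: "finite X" and d: "d \<in> objs X"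
  shows "idm X d = hom_sum X d d (Sigma X (\<lambda>x. {..<d x}))
    (\<lambda>(x, j). cmp X (summand_incl X d x j) (summand_proj X d x j))"
proof (rule graded_eqI)
  fix z assume z: "z \<in> X"
  let ?S = "Sigma X (\<lambda>x. {..<d x})"
  let ?t = "\<lambda>p. (case p of (x, j) \<Rightarrow> cmp X (summand_incl X d x j) (summand_proj X d x j)) z"
  have "1\<^sub>m (d z) = mat_sum (d z) (d z) ?S ?t"
  proof (rule eq_matI)
    fix r c assume "r < dim_row (mat_sum (d z) (d z) ?S ?t)" "c < dim_col (mat_sum (d z) (d z) ?S ?t)"
    then have r: "r < d z" and c: "c < d z" by auto
    let ?u = "\<lambda>x j. cmp X (summand_incl X d x j) (summand_proj X d x j) z $$ (r, c)"
    have u: "?u x j = (if x = z \<and> r = j \<and> c = j then 1 else 0)" if "x \<in> X" "j < d x" for x j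
      using that r c z unfolding cmp_def summand_incl_def summand_proj_def by (auto simp: scalar_prod_def)
    have "mat_sum (d z) (d z) ?S ?t $$ (r, c) = (\<Sum>p\<in>?S. ?u (fst p) (snd p))"
      using r c by (simp add: split_def)
    also have "\<dots> = (\<Sum>x\<in>X. \<Sum>j<d x. ?u x j)"
      using sum.Sigma[OF fin, of "\<lambda>x. {..<d x}" ?u, symmetric] by (simp add: split_def)
    also have "\<dots> = (\<Sum>x\<in>X. \<Sum>j<d x. if x = z \<and> r = j \<and> c = j then 1 else 0)"
      by (intro sum.cong refl) (simp add: u)
    also have "\<dots> = (\<Sum>j<d z. if r = j \<and> c = j then 1 else 0)"
      using z fin by (subst sum.remove[of X z]) (auto intro!: sum.neutral)
    also have "\<dots> = 1\<^sub>m (d z) $$ (r, c)"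
      using r c by (cases "r = c") (auto intro: sum.neutral)
    finally show "1\<^sub>m (d z) $$ (r, c) = mat_sum (d z) (d z) ?S ?t $$ (r, c)" by (rule sym)
  qed auto
  then show "idm X d z = hom_sum X d d ?S (\<lambda>(x, j). cmp X (summand_incl X d x j) (summand_proj X d x j)) z"
    using z unfolding idm_def hom_sum_def by simp
qed (simp add: idm_def hom_sum_def)

context
  fixes n :: nat and X :: "'x set" and act :: "nat \<Rightarrow> 'x \<Rightarrow> 'x"
  assumes n1: "1 \<le> n" and GS: "is_Gset n X act"
begin

lemma gmor_summand_incl: "g < n \<Longrightarrow> x \<in> X \<Longrightarrow>
    gmor n X act g (summand_incl X d x j) = summand_incl X (gobj n X act g d) (act g x) j"
  and gmor_summand_proj: "g < n \<Longrightarrow> x \<in> X \<Longrightarrow>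
    gmor n X act g (summand_proj X d x j) = summand_proj X (gobj n X act g d) (act g x) j"
  unfolding gmor_def summand_incl_def summand_proj_def gobj_def
  by (auto intro!: ext simp: ginv_act[OF n1 GS] act_ginv[OF n1 GS] act_closed[OF n1 GS] ginv_act_closed[OF n1 GS])

lemma Sigma_gobj:
  assumes g: "g < n"
  shows "Sigma X (\<lambda>x. {..<gobj n X act g d x}) = (\<lambda>(x, j). (act g x, j)) ` Sigma X (\<lambda>x. {..<d x})"
proof (intro equalityI subsetI)
  fix p assume "p \<in> Sigma X (\<lambda>x. {..<gobj n X act g d x})"
  then obtain x j where p: "p = (x, j)" and x: "x \<in> X" and j: "j < d (act (ginv n g) x)"
    unfolding gobj_def by auto
  show "p \<in> (\<lambda>(x, j). (act g x, j)) ` Sigma X (\<lambda>x. {..<d x})"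
  proof (rule image_eqI)
    show "p = (\<lambda>(x, j). (act g x, j)) (act (ginv n g) x, j)" using p act_ginv[OF n1 GS g x] by simp
  qed (use x j ginv_act_closed[OF n1 GS g x] in auto)
next
  fix p assume "p \<in> (\<lambda>(x, j). (act g x, j)) ` Sigma X (\<lambda>x. {..<d x})"
  then show "p \<in> Sigma X (\<lambda>x. {..<gobj n X act g d x})"
    using ginv_act[OF n1 GS g] act_closed[OF n1 GS g] unfolding gobj_def by auto
qed

lemma inj_on_act_Sigma: "g < n \<Longrightarrow> inj_on (\<lambda>(x, j). (act g x, j)) (Sigma X B)"
  by (auto simp: inj_on_def dest: act_inj[OF n1 GS])

end

section \<open>Module functors\<close>

locale cyclic_module_functor =
  fixes n :: nat and X :: "'x set" and aX :: "nat \<Rightarrow> 'x \<Rightarrow> 'x" and PX :: "nat \<Rightarrow> nat \<Rightarrow> 'x \<Rightarrow> 'a::field"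
    and Y :: "'y set" and aY :: "nat \<Rightarrow> 'y \<Rightarrow> 'y" and PY :: "nat \<Rightarrow> nat \<Rightarrow> 'y \<Rightarrow> 'a"
    and Fo :: "('x \<Rightarrow> nat) \<Rightarrow> ('y \<Rightarrow> nat)" and Fm :: "('x \<Rightarrow> 'a mat) \<Rightarrow> ('y \<Rightarrow> 'a mat)"
    and s :: "nat \<Rightarrow> ('x \<Rightarrow> nat) \<Rightarrow> ('y \<Rightarrow> 'a mat)"
  assumes n1: "1 \<le> n" and GX: "is_Gset n X aX" and GY: "is_Gset n Y aY"
    and MF: "module_functor n X aX PX Y aY PY (Fo, Fm, s)"
begin

lemma F_linear: "linear_functor X Y Fo Fm"
  and s_iso: "g < n \<Longrightarrow> d \<in> objs X \<Longrightarrow> is_iso Y (Fo (gobj n X aX g d)) (gobj n Y aY g (Fo d)) (s g d)"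
  and s_natural: "g < n \<Longrightarrow> d \<in> objs X \<Longrightarrow> e \<in> objs X \<Longrightarrow> f \<in> homs X d e \<Longrightarrow>
    cmp Y (gmor n Y aY g (Fm f)) (s g d) = cmp Y (s g e) (Fm (gmor n X aX g f))"
  and s_modc: "g < n \<Longrightarrow> h < n \<Longrightarrow> d \<in> objs X \<Longrightarrow>
    cmp Y (modc n Y aY PY g h (Fo d)) (s ((g + h) mod n) d)
      = cmp Y (cmp Y (gmor n Y aY g (s h d)) (s g (gobj n X aX h d))) (Fm (modc n X aX PX g h d))"
  using MF unfolding module_functor_def by auto

lemmas F_obj = linear_functor_obj[OF F_linear] and F_hom = linear_functor_hom[OF F_linear]
  and F_idm = linear_functor_idm[OF F_linear] and F_cmp = linear_functor_cmp[OF F_linear]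
  and F_addm = linear_functor_addm[OF F_linear] and F_smultm = linear_functor_smultm[OF F_linear]
  and F_hom_sum = linear_functor_hom_sum[OF F_linear]

lemma Fm_carrier: "d \<in> objs X \<Longrightarrow> e \<in> objs X \<Longrightarrow> f \<in> homs X d e \<Longrightarrow> Fm f y \<in> carrier_mat (Fo e y) (Fo d y)"
  by (rule homs_carrier_mat[OF F_obj F_obj F_hom])

lemma aY_ginv_closed: "g < n \<Longrightarrow> y \<in> Y \<Longrightarrow> aY (ginv n g) y \<in> Y"
  by (rule ginv_act_closed[OF n1 GY])

definition sinv :: "nat \<Rightarrow> ('x \<Rightarrow> nat) \<Rightarrow> ('y \<Rightarrow> 'a mat)" where
  "sinv g d = (SOME f'. f' \<in> homs Y (gobj n Y aY g (Fo d)) (Fo (gobj n X aX g d)) \<and>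
     cmp Y f' (s g d) = idm Y (Fo (gobj n X aX g d)) \<and> cmp Y (s g d) f' = idm Y (gobj n Y aY g (Fo d)))"

lemma s_sinv_homs:
  assumes g: "g < n" and d: "d \<in> objs X"
  shows "s g d \<in> homs Y (Fo (gobj n X aX g d)) (gobj n Y aY g (Fo d))"
    "sinv g d \<in> homs Y (gobj n Y aY g (Fo d)) (Fo (gobj n X aX g d))"
    "cmp Y (sinv g d) (s g d) = idm Y (Fo (gobj n X aX g d))"
    "cmp Y (s g d) (sinv g d) = idm Y (gobj n Y aY g (Fo d))"
proof -
  note iso = s_iso[OF g d, unfolded is_iso_def]
  then show "s g d \<in> homs Y (Fo (gobj n X aX g d)) (gobj n Y aY g (Fo d))" by blast
  from iso have "\<exists>f'. f' \<in> homs Y (gobj n Y aY g (Fo d)) (Fo (gobj n X aX g d)) \<and>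
      cmp Y f' (s g d) = idm Y (Fo (gobj n X aX g d)) \<and> cmp Y (s g d) f' = idm Y (gobj n Y aY g (Fo d))"
    by blast
  from someI_ex[OF this]
  show "sinv g d \<in> homs Y (gobj n Y aY g (Fo d)) (Fo (gobj n X aX g d))"
    "cmp Y (sinv g d) (s g d) = idm Y (Fo (gobj n X aX g d))"
    "cmp Y (s g d) (sinv g d) = idm Y (gobj n Y aY g (Fo d))"
    unfolding sinv_def by blast+
qed

lemma s_sinv_at:
  assumes g: "g < n" and d: "d \<in> objs X" and y: "y \<in> Y"
  shows "s g d y \<in> carrier_mat (Fo d (aY (ginv n g) y)) (Fo (gobj n X aX g d) y)"
    "sinv g d y \<in> carrier_mat (Fo (gobj n X aX g d) y) (Fo d (aY (ginv n g) y))"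
    "sinv g d y * s g d y = 1\<^sub>m (Fo (gobj n X aX g d) y)"
    "s g d y * sinv g d y = 1\<^sub>m (Fo d (aY (ginv n g) y))"
  using homsD[OF s_sinv_homs(1)[OF g d] y] homsD[OF s_sinv_homs(2)[OF g d] y]
    s_sinv_homs(3,4)[OF g d] y
  by (auto simp: gobj_at[OF n1 GY] cmp_at idm_at dest: fun_cong[of _ _ y])

lemma modc_homs: "modc n X aX PX g h d \<in> homs X (gobj n X aX ((g + h) mod n) d) (gobj n X aX ((g + h) mod n) d)"
  by (rule homsI) (auto simp: modc_def)

lemma s_modc_at:
  assumes g: "g < n" and h: "h < n" and d: "d \<in> objs X" and y: "y \<in> Y"
  shows "PY g h y \<cdot>\<^sub>m s ((g + h) mod n) d y
    = s h d (aY (ginv n g) y) * s g (gobj n X aX h d) y * Fm (modc n X aX PX g h d) y"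
proof -
  have "(PY g h y \<cdot>\<^sub>m 1\<^sub>m (Fo d (aY (ginv n ((g + h) mod n)) y))) * s ((g + h) mod n) d y
    = s h d (aY (ginv n g) y) * s g (gobj n X aX h d) y * Fm (modc n X aX PX g h d) y"
    using fun_cong[OF s_modc[OF g h d], of y] y by (simp add: cmp_at gmor_at[OF n1 GY] modc_def gobj_at[OF n1 GY])
  moreover have "dim_row (s ((g + h) mod n) d y) = Fo d (aY (ginv n ((g + h) mod n)) y)"
    using s_sinv_at(1)[OF _ d y, of "(g + h) mod n"] n1 by simp
  ultimately show ?thesis by (simp add: smult_one_mult_mat)
qed

end

section \<open>Schur's lemma\<close>

locale cyclic_module_functor_endo = cyclic_module_functor n X aX PX Y aY PY Fo Fm s
  for n :: nat and X :: "'x set" and aX :: "nat \<Rightarrow> 'x \<Rightarrow> 'x" and PX :: "nat \<Rightarrow> nat \<Rightarrow> 'x \<Rightarrow> 'a::field"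
    and Y :: "'y set" and aY :: "nat \<Rightarrow> 'y \<Rightarrow> 'y" and PY :: "nat \<Rightarrow> nat \<Rightarrow> 'y \<Rightarrow> 'a"
    and Fo :: "('x \<Rightarrow> nat) \<Rightarrow> ('y \<Rightarrow> nat)" and Fm :: "('x \<Rightarrow> 'a mat) \<Rightarrow> ('y \<Rightarrow> 'a mat)"
    and s :: "nat \<Rightarrow> ('x \<Rightarrow> nat) \<Rightarrow> ('y \<Rightarrow> 'a mat)" +
  fixes \<theta> :: "('x \<Rightarrow> nat) \<Rightarrow> ('y \<Rightarrow> 'a mat)"
  assumes endo: "mf_mor n X aX Y aY (Fo, Fm, s) (Fo, Fm, s) \<theta>"
begin

lemma \<theta>_homs: "d \<in> objs X \<Longrightarrow> \<theta> d \<in> homs Y (Fo d) (Fo d)"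
  and \<theta>_natural_cmp: "d \<in> objs X \<Longrightarrow> e \<in> objs X \<Longrightarrow> f \<in> homs X d e \<Longrightarrow>
    cmp Y (Fm f) (\<theta> d) = cmp Y (\<theta> e) (Fm f)"
  and \<theta>_s_cmp: "g < n \<Longrightarrow> d \<in> objs X \<Longrightarrow>
    cmp Y (s g d) (\<theta> (gobj n X aX g d)) = cmp Y (gmor n Y aY g (\<theta> d)) (s g d)"
  using endo unfolding mf_mor_def by auto

lemma \<theta>_carrier: "d \<in> objs X \<Longrightarrow> \<theta> d y \<in> carrier_mat (Fo d y) (Fo d y)"
  by (rule homs_carrier_mat[OF F_obj F_obj \<theta>_homs])

lemma \<theta>_natural: "d \<in> objs X \<Longrightarrow> e \<in> objs X \<Longrightarrow> f \<in> homs X d e \<Longrightarrow> y \<in> Y \<Longrightarrow>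
    \<theta> e y * Fm f y = Fm f y * \<theta> d y"
  using fun_cong[OF \<theta>_natural_cmp, of d e f y] by (simp add: cmp_at)

lemma \<theta>_s: "g < n \<Longrightarrow> d \<in> objs X \<Longrightarrow> y \<in> Y \<Longrightarrow>
    \<theta> d (aY (ginv n g) y) * s g d y = s g d y * \<theta> (gobj n X aX g d) y"
  using fun_cong[OF \<theta>_s_cmp, of g d y] by (simp add: cmp_at gmor_at[OF n1 GY])

lemma \<theta>_sinv:
  assumes g: "g < n" and d: "d \<in> objs X" and y: "y \<in> Y"
  shows "\<theta> (gobj n X aX g d) y * sinv g d y = sinv g d y * \<theta> d (aY (ginv n g) y)"
proof -
  let ?gd = "gobj n X aX g d" and ?y' = "aY (ginv n g) y"
  note S = s_sinv_at[OF g d y] and T1 = \<theta>_carrier[OF gobj_objs[OF n1 GX], of g d y]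
    and T2 = \<theta>_carrier[OF d, of ?y']
  have "\<theta> ?gd y * sinv g d y = (sinv g d y * s g d y) * (\<theta> ?gd y * sinv g d y)"
    using S(2,3) T1 by simp
  also have "\<dots> = sinv g d y * ((s g d y * \<theta> ?gd y) * sinv g d y)"
    using S(1,2) T1 by (simp add: assoc_mult_mat_dim)
  also have "\<dots> = sinv g d y * (\<theta> d ?y' * (s g d y * sinv g d y))"
    unfolding \<theta>_s[OF g d y, symmetric] using S T2 by (simp add: assoc_mult_mat_dim)
  finally show ?thesis using S T2 by simp
qed

definition ker_data :: "('x \<Rightarrow> nat) \<Rightarrow> 'y \<Rightarrow> nat \<times> 'a mat \<times> 'a mat" where
  "ker_data d y = (SOME t. kernel_retract (\<theta> d y) (Fo d y) (fst t) (fst (snd t)) (snd (snd t)))"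

definition "ker_dim d y = fst (ker_data d y)"
definition "ker_incl d y = fst (snd (ker_data d y))"
definition "ker_retr d y = snd (snd (ker_data d y))"

lemma ker_retract: "d \<in> objs X \<Longrightarrow> kernel_retract (\<theta> d y) (Fo d y) (ker_dim d y) (ker_incl d y) (ker_retr d y)"
proof -
  assume "d \<in> objs X"
  then have "\<exists>t. kernel_retract (\<theta> d y) (Fo d y) (fst t) (fst (snd t)) (snd (snd t))"
    using kernel_retract_exists[OF \<theta>_carrier] by auto
  from someI_ex[OF this] show ?thesis unfolding ker_dim_def ker_incl_def ker_retr_def ker_data_def .
qed

lemmas ker_incl_carrier = kernel_retract_carrier(1)[OF ker_retract]
  and ker_retr_carrier = kernel_retract_carrier(2)[OF ker_retract]
  and ker_retr_incl = kernel_retract_carrier(3)[OF ker_retract]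
  and \<theta>_ker_incl = kernel_retract_carrier(4)[OF ker_retract]

lemma Fm_kernel:
  assumes d: "d \<in> objs X" and e: "e \<in> objs X" and f: "f \<in> homs X d e" and y: "y \<in> Y"
    and N: "N \<in> carrier_mat (Fo d y) c" and TN: "\<theta> d y * N = 0\<^sub>m (Fo d y) c"
  shows "\<theta> e y * (Fm f y * N) = 0\<^sub>m (Fo e y) c"
  by (rule intertwining_kernel[OF \<theta>_carrier[OF e] Fm_carrier[OF d e f] \<theta>_carrier[OF d] N
        \<theta>_natural[OF d e f y] TN])

lemma s_kernel:
  assumes g: "g < n" and d: "d \<in> objs X" and y: "y \<in> Y"
    and N: "N \<in> carrier_mat (Fo (gobj n X aX g d) y) c" and TN: "\<theta> (gobj n X aX g d) y * N = 0\<^sub>m (Fo (gobj n X aX g d) y) c"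
  shows "\<theta> d (aY (ginv n g) y) * (s g d y * N) = 0\<^sub>m (Fo d (aY (ginv n g) y)) c"
  by (rule intertwining_kernel[OF \<theta>_carrier[OF d] s_sinv_at(1)[OF g d y]
        \<theta>_carrier[OF gobj_objs[OF n1 GX]] N \<theta>_s[OF g d y] TN])

lemma sinv_kernel:
  assumes g: "g < n" and d: "d \<in> objs X" and y: "y \<in> Y"
    and N: "N \<in> carrier_mat (Fo d (aY (ginv n g) y)) c" and TN: "\<theta> d (aY (ginv n g) y) * N = 0\<^sub>m (Fo d (aY (ginv n g) y)) c"
  shows "\<theta> (gobj n X aX g d) y * (sinv g d y * N) = 0\<^sub>m (Fo (gobj n X aX g d) y) c"
  by (rule intertwining_kernel[OF \<theta>_carrier[OF gobj_objs[OF n1 GX]] s_sinv_at(2)[OF g d y]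
        \<theta>_carrier[OF d] N \<theta>_sinv[OF g d y] TN])

definition "ker_obj d = (\<lambda>y. if y \<in> Y then ker_dim d y else 0)"
definition "ker_mor f = (\<lambda>y. if y \<in> Y then ker_retr (hom_cod X f) y * Fm f y * ker_incl (hom_dom X f) y else 0\<^sub>m 0 0)"
definition "ker_s g d = (\<lambda>y. if y \<in> Y
  then ker_retr d (aY (ginv n g) y) * s g d y * ker_incl (gobj n X aX g d) y else 0\<^sub>m 0 0)"
definition "ker_sinv g d = (\<lambda>y. if y \<in> Y
  then ker_retr (gobj n X aX g d) y * sinv g d y * ker_incl d (aY (ginv n g) y) else 0\<^sub>m 0 0)"
definition "ker_embed d = (\<lambda>y. if y \<in> Y then ker_incl d y else 0\<^sub>m 0 0)"

lemma ker_obj_at: "y \<in> Y \<Longrightarrow> ker_obj d y = ker_dim d y"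
  and ker_s_at: "y \<in> Y \<Longrightarrow> ker_s g d y = ker_retr d (aY (ginv n g) y) * s g d y * ker_incl (gobj n X aX g d) y"
  and ker_sinv_at: "y \<in> Y \<Longrightarrow>
    ker_sinv g d y = ker_retr (gobj n X aX g d) y * sinv g d y * ker_incl d (aY (ginv n g) y)"
  and ker_embed_at: "y \<in> Y \<Longrightarrow> ker_embed d y = ker_incl d y"
  unfolding ker_obj_def ker_s_def ker_sinv_def ker_embed_def by simp_all

lemma ker_mor_at: "f \<in> homs X d e \<Longrightarrow> d \<in> objs X \<Longrightarrow> e \<in> objs X \<Longrightarrow> y \<in> Y \<Longrightarrow>
    ker_mor f y = ker_retr e y * Fm f y * ker_incl d y"
  unfolding ker_mor_def using hom_dom_cod[of f X d e] by simp

lemma ker_obj_objs: "ker_obj d \<in> objs Y"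
  unfolding ker_obj_def objs_def by auto

lemma ker_mor_carrier:
  "f \<in> homs X d e \<Longrightarrow> d \<in> objs X \<Longrightarrow> e \<in> objs X \<Longrightarrow> y \<in> Y \<Longrightarrow>
    ker_mor f y \<in> carrier_mat (ker_dim e y) (ker_dim d y)"
  unfolding ker_mor_at[of f d e y] using ker_incl_carrier[of d y] ker_retr_carrier[of e y] Fm_carrier[of d e f y]
  by (intro mult_carrier_mat) auto

lemma ker_s_carrier:
  "g < n \<Longrightarrow> d \<in> objs X \<Longrightarrow> y \<in> Y \<Longrightarrow>
    ker_s g d y \<in> carrier_mat (ker_dim d (aY (ginv n g) y)) (ker_dim (gobj n X aX g d) y)"
  unfolding ker_s_at[of y g d] using ker_retr_carrier[of d] s_sinv_at(1)[of g d y]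
    ker_incl_carrier[OF gobj_objs[OF n1 GX], of g d y] by (intro mult_carrier_mat) auto

lemma ker_mor_homs:
  "d \<in> objs X \<Longrightarrow> e \<in> objs X \<Longrightarrow> f \<in> homs X d e \<Longrightarrow> ker_mor f \<in> homs Y (ker_obj d) (ker_obj e)"
  by (rule homsI) (auto simp: ker_obj_at ker_mor_carrier, simp add: ker_mor_def)

lemma ker_mor_idm:
  assumes d: "d \<in> objs X"
  shows "ker_mor (idm X d) = idm Y (ker_obj d)"
proof (rule graded_eqI)
  fix y assume y: "y \<in> Y"
  have "ker_mor (idm X d) y = ker_retr d y * 1\<^sub>m (Fo d y) * ker_incl d y"
    unfolding ker_mor_at[OF idm_homs d d y] F_idm[OF d] idm_at[OF y] ..
  also have "\<dots> = idm Y (ker_obj d) y"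
    using ker_retr_carrier[OF d, of y] ker_retr_incl[OF d, of y] unfolding idm_at[OF y] ker_obj_at[OF y] by simp
  finally show "ker_mor (idm X d) y = idm Y (ker_obj d) y" .
qed (simp add: ker_mor_def idm_def)

lemma ker_mor_cmp:
  assumes d: "d \<in> objs X" and e: "e \<in> objs X" and k: "k \<in> objs X"
    and f: "f \<in> homs X d e" and f': "f' \<in> homs X e k"
  shows "ker_mor (cmp X f' f) = cmp Y (ker_mor f') (ker_mor f)"
proof (rule graded_eqI)
  fix y assume y: "y \<in> Y"
  show "ker_mor (cmp X f' f) y = cmp Y (ker_mor f') (ker_mor f) y"
    unfolding ker_mor_at[OF cmp_homs[OF f f'] d k y] F_cmp[OF d e k f f'] cmp_at[OF y]
      ker_mor_at[OF f d e y] ker_mor_at[OF f' e k y]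
    by (rule kernel_retract_compress_mult[OF ker_retract[OF e] ker_retr_carrier[OF k]
          Fm_carrier[OF e k f'] Fm_carrier[OF d e f] ker_incl_carrier[OF d]
          Fm_kernel[OF d e f y ker_incl_carrier[OF d] \<theta>_ker_incl[OF d]], symmetric])
qed (simp add: ker_mor_def cmp_def)

lemma ker_mor_addm:
  assumes d: "d \<in> objs X" and e: "e \<in> objs X" and f: "f \<in> homs X d e" and f': "f' \<in> homs X d e"
  shows "ker_mor (addm X f f') = addm Y (ker_mor f) (ker_mor f')"
proof (rule graded_eqI)
  fix y assume y: "y \<in> Y"
  note c = ker_incl_carrier[OF d, of y] ker_retr_carrier[OF e, of y]
    Fm_carrier[OF d e f, of y] Fm_carrier[OF d e f', of y]
  show "ker_mor (addm X f f') y = addm Y (ker_mor f) (ker_mor f') y"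
    unfolding ker_mor_at[OF addm_homs[OF f f'] d e y] F_addm[OF d e f f'] addm_at[OF y]
      ker_mor_at[OF f d e y] ker_mor_at[OF f' d e y]
    using c[THEN carrier_matD(1)] c[THEN carrier_matD(2)]
    by (simp add: mult_add_distrib_mat_dim add_mult_distrib_mat_dim)
qed (simp add: ker_mor_def addm_def)

lemma ker_mor_smultm:
  assumes d: "d \<in> objs X" and e: "e \<in> objs X" and f: "f \<in> homs X d e"
  shows "ker_mor (smultm X c f) = smultm Y c (ker_mor f)"
proof (rule graded_eqI)
  fix y assume y: "y \<in> Y"
  note cs = ker_incl_carrier[OF d, of y] ker_retr_carrier[OF e, of y] Fm_carrier[OF d e f, of y]
  show "ker_mor (smultm X c f) y = smultm Y c (ker_mor f) y"
    unfolding ker_mor_at[OF smultm_homs[OF f] d e y] F_smultm[OF d e f] smultm_at[OF y] ker_mor_at[OF f d e y]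
    using cs[THEN carrier_matD(1)] cs[THEN carrier_matD(2)]
    by (simp add: mult_smult_distrib_dim mult_smult_assoc_mat_dim)
qed (simp add: ker_mor_def smultm_def)

lemma ker_linear_functor: "linear_functor X Y ker_obj ker_mor"
  unfolding linear_functor_def
  by (intro conjI ballI allI ker_obj_objs ker_mor_homs ker_mor_idm ker_mor_cmp ker_mor_addm ker_mor_smultm)

lemma ker_s_homs:
  assumes g: "g < n" and d: "d \<in> objs X"
  shows "ker_s g d \<in> homs Y (ker_obj (gobj n X aX g d)) (gobj n Y aY g (ker_obj d))"
    "ker_sinv g d \<in> homs Y (gobj n Y aY g (ker_obj d)) (ker_obj (gobj n X aX g d))"
proof (rule_tac [!] homsI)
  fix y assume y: "y \<in> Y"
  note y' = aY_ginv_closed[OF g y]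
  show "ker_s g d y \<in> carrier_mat (gobj n Y aY g (ker_obj d) y) (ker_obj (gobj n X aX g d) y)"
    using ker_s_carrier[OF g d y] unfolding gobj_at[OF n1 GY y] ker_obj_at[OF y] ker_obj_at[OF y'] .
  show "ker_sinv g d y \<in> carrier_mat (ker_obj (gobj n X aX g d) y) (gobj n Y aY g (ker_obj d) y)"
    unfolding ker_sinv_at[OF y] gobj_at[OF n1 GY y] ker_obj_at[OF y] ker_obj_at[OF y']
    using ker_retr_carrier[OF gobj_objs[OF n1 GX]] s_sinv_at(2)[OF g d y] ker_incl_carrier[OF d]
    by (intro mult_carrier_mat)
qed (simp_all add: ker_s_def ker_sinv_def)

lemma ker_s_iso:
  assumes g: "g < n" and d: "d \<in> objs X"
  shows "is_iso Y (ker_obj (gobj n X aX g d)) (gobj n Y aY g (ker_obj d)) (ker_s g d)"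
proof -
  let ?gd = "gobj n X aX g d"
  note gd = gobj_objs[OF n1 GX, of g d]
  have "cmp Y (ker_sinv g d) (ker_s g d) = idm Y (ker_obj ?gd)"
  proof (rule graded_eqI)
    fix y assume y: "y \<in> Y"
    let ?y' = "aY (ginv n g) y"
    note S = s_sinv_at[OF g d y]
    have "ker_sinv g d y * ker_s g d y = ker_retr ?gd y * (sinv g d y * s g d y) * ker_incl ?gd y"
      unfolding ker_sinv_at[OF y] ker_s_at[OF y]
      by (rule kernel_retract_compress_mult[OF ker_retract[OF d] ker_retr_carrier[OF gd] S(2) S(1)
            ker_incl_carrier[OF gd] s_kernel[OF g d y ker_incl_carrier[OF gd] \<theta>_ker_incl[OF gd]]])
    then show "cmp Y (ker_sinv g d) (ker_s g d) y = idm Y (ker_obj ?gd) y"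
      using ker_retr_carrier[OF gd, of y] ker_retr_incl[OF gd, of y] S(3)
      unfolding cmp_at[OF y] idm_at[OF y] ker_obj_at[OF y] by simp
  qed (simp add: cmp_def idm_def)
  moreover have "cmp Y (ker_s g d) (ker_sinv g d) = idm Y (gobj n Y aY g (ker_obj d))"
  proof (rule graded_eqI)
    fix y assume y: "y \<in> Y"
    let ?y' = "aY (ginv n g) y"
    note S = s_sinv_at[OF g d y]
    have "ker_s g d y * ker_sinv g d y = ker_retr d ?y' * (s g d y * sinv g d y) * ker_incl d ?y'"
      unfolding ker_sinv_at[OF y] ker_s_at[OF y]
      by (rule kernel_retract_compress_mult[OF ker_retract[OF gd] ker_retr_carrier[OF d] S(1) S(2)
            ker_incl_carrier[OF d] sinv_kernel[OF g d y ker_incl_carrier[OF d] \<theta>_ker_incl[OF d]]])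
    then show "cmp Y (ker_s g d) (ker_sinv g d) y = idm Y (gobj n Y aY g (ker_obj d)) y"
      using ker_retr_carrier[OF d, of ?y'] ker_retr_incl[OF d, of ?y'] S(4)
      unfolding cmp_at[OF y] idm_at[OF y] gobj_at[OF n1 GY y] ker_obj_at[OF aY_ginv_closed[OF g y]] by simp
  qed (simp add: cmp_def idm_def)
  ultimately show ?thesis unfolding is_iso_def using ker_s_homs[OF g d] by blast
qed

lemma ker_s_natural:
  assumes g: "g < n" and d: "d \<in> objs X" and e: "e \<in> objs X" and f: "f \<in> homs X d e"
  shows "cmp Y (gmor n Y aY g (ker_mor f)) (ker_s g d) = cmp Y (ker_s g e) (ker_mor (gmor n X aX g f))"
proof (rule graded_eqI)
  fix y assume y: "y \<in> Y"
  let ?y' = "aY (ginv n g) y" and ?gd = "gobj n X aX g d" and ?ge = "gobj n X aX g e"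
    and ?gf = "gmor n X aX g f"
  have y': "?y' \<in> Y" by (rule aY_ginv_closed[OF g y])
  have gd: "?gd \<in> objs X" and ge: "?ge \<in> objs X" by (rule gobj_objs[OF n1 GX])+
  have gf: "?gf \<in> homs X ?gd ?ge" by (rule gmor_homs[OF n1 GX g f])
  have "Fm f ?y' * s g d y = s g e y * Fm ?gf y"
    using fun_cong[OF s_natural[OF g d e f], of y] unfolding cmp_at[OF y] gmor_at[OF n1 GY y] .
  moreover have "ker_mor f ?y' * ker_s g d y = ker_retr e ?y' * (Fm f ?y' * s g d y) * ker_incl ?gd y"
    unfolding ker_mor_at[OF f d e y'] ker_s_at[OF y]
    by (rule kernel_retract_compress_mult[OF ker_retract[OF d] ker_retr_carrier[OF e] Fm_carrier[OF d e f]
          s_sinv_at(1)[OF g d y] ker_incl_carrier[OF gd] s_kernel[OF g d y ker_incl_carrier[OF gd] \<theta>_ker_incl[OF gd]]])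
  moreover have "ker_s g e y * ker_mor ?gf y = ker_retr e ?y' * (s g e y * Fm ?gf y) * ker_incl ?gd y"
    unfolding ker_mor_at[OF gf gd ge y] ker_s_at[OF y]
    by (rule kernel_retract_compress_mult[OF ker_retract[OF ge] ker_retr_carrier[OF e] s_sinv_at(1)[OF g e y]
          Fm_carrier[OF gd ge gf] ker_incl_carrier[OF gd] Fm_kernel[OF gd ge gf y ker_incl_carrier[OF gd] \<theta>_ker_incl[OF gd]]])
  ultimately show "cmp Y (gmor n Y aY g (ker_mor f)) (ker_s g d) y = cmp Y (ker_s g e) (ker_mor ?gf) y"
    unfolding cmp_at[OF y] gmor_at[OF n1 GY y] by simp
qed (simp add: cmp_def)

lemma ker_s_modc_at:
  assumes g: "g < n" and h: "h < n" and d: "d \<in> objs X" and y: "y \<in> Y"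
  defines "b \<equiv> gobj n X aX h d" and "c \<equiv> gobj n X aX ((g + h) mod n) d" and "M \<equiv> modc n X aX PX g h d"
    and "y' \<equiv> aY (ginv n g) y" and "y'' \<equiv> aY (ginv n ((g + h) mod n)) y"
  shows "ker_s h d y' * ker_s g b y * ker_mor M y = ker_retr d y'' * (PY g h y \<cdot>\<^sub>m s ((g + h) mod n) d y) * ker_incl c y"
proof -
  have y': "y' \<in> Y" unfolding y'_def by (rule aY_ginv_closed[OF g y])
  have y'': "aY (ginv n h) y' = y''" unfolding y'_def y''_def using ginv_add_act[OF n1 GY g h y] by simp
  have b: "b \<in> objs X" and c: "c \<in> objs X" unfolding b_def c_def by (rule gobj_objs[OF n1 GX])+
  have gb: "gobj n X aX g b = c" unfolding b_def c_def by (rule gobj_gobj[OF n1 GX g h])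
  have M: "M \<in> homs X c c" unfolding M_def c_def by (rule modc_homs)
  note Sh = s_sinv_at(1)[OF h d y', unfolded y'', folded b_def] and Sg = s_sinv_at(1)[OF g b y, unfolded gb y'_def[symmetric]]
    and FM = Fm_carrier[OF c c M, of y]
  have MA: "\<theta> c y * (Fm M y * ker_incl c y) = 0\<^sub>m (Fo c y) (ker_dim c y)"
    by (rule Fm_kernel[OF c c M y ker_incl_carrier[OF c] \<theta>_ker_incl[OF c]])
  have "ker_s g b y * ker_mor M y = ker_retr b y' * (s g b y * Fm M y) * ker_incl c y"
    unfolding ker_s_at[OF y] ker_mor_at[OF M c c y] gb y'_def[symmetric]
    by (rule kernel_retract_compress_mult[OF ker_retract[OF c] ker_retr_carrier[OF b] Sg FM
          ker_incl_carrier[OF c] MA])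
  moreover have "\<theta> b y' * ((s g b y * Fm M y) * ker_incl c y) = 0\<^sub>m (Fo b y') (ker_dim c y)"
    using s_kernel[OF g b y, unfolded gb y'_def[symmetric], OF _ MA] Sg FM ker_incl_carrier[OF c, of y]
    by (simp add: assoc_mult_mat_dim)
  then have "ker_s h d y' * (ker_retr b y' * (s g b y * Fm M y) * ker_incl c y)
      = ker_retr d y'' * (s h d y' * (s g b y * Fm M y)) * ker_incl c y"
    unfolding ker_s_at[OF y'] y'' b_def[symmetric]
    by (rule kernel_retract_compress_mult[OF ker_retract[OF b] ker_retr_carrier[OF d] Sh
          mult_carrier_mat[OF Sg FM] ker_incl_carrier[OF c]])
  moreover have "s h d y' * (s g b y * Fm M y) = PY g h y \<cdot>\<^sub>m s ((g + h) mod n) d y"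
    using s_modc_at[OF g h d y, folded b_def M_def y'_def] Sh Sg FM by (simp add: assoc_mult_mat_dim)
  moreover have "ker_s h d y' * ker_s g b y * ker_mor M y = ker_s h d y' * (ker_s g b y * ker_mor M y)"
    using ker_s_carrier[OF h d y', unfolded y'' b_def[symmetric]] ker_s_carrier[OF g b y, unfolded gb y'_def[symmetric]]
      ker_mor_carrier[OF M c c y] by (rule assoc_mult_mat)
  ultimately show ?thesis by simp
qed

lemma ker_s_modc:
  assumes g: "g < n" and h: "h < n" and d: "d \<in> objs X"
  shows "cmp Y (modc n Y aY PY g h (ker_obj d)) (ker_s ((g + h) mod n) d)
    = cmp Y (cmp Y (gmor n Y aY g (ker_s h d)) (ker_s g (gobj n X aX h d))) (ker_mor (modc n X aX PX g h d))"
proof (rule graded_eqI)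
  fix y assume y: "y \<in> Y"
  let ?gh = "(g + h) mod n" and ?y'' = "aY (ginv n ((g + h) mod n)) y"
  have gh: "?gh < n" using n1 by simp
  show "cmp Y (modc n Y aY PY g h (ker_obj d)) (ker_s ?gh d) y
    = cmp Y (cmp Y (gmor n Y aY g (ker_s h d)) (ker_s g (gobj n X aX h d))) (ker_mor (modc n X aX PX g h d)) y"
    using ker_s_modc_at[OF g h d y] y s_sinv_at(1)[OF gh d y] ker_retr_carrier[OF d, of ?y'']
      ker_incl_carrier[OF gobj_objs[OF n1 GX], of ?gh d y]
    by (simp add: cmp_at gmor_at[OF n1 GY] modc_def gobj_at[OF n1 GY] ker_obj_at aY_ginv_closed[OF gh y]
        ker_s_at smult_one_mult_mat mult_smult_distrib_dim mult_smult_assoc_mat_dim)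
qed (simp add: cmp_def)

lemma ker_module_functor: "module_functor n X aX PX Y aY PY (ker_obj, ker_mor, ker_s)"
  unfolding module_functor_def prod.case
  by (intro conjI allI ballI impI ker_linear_functor ker_s_iso ker_s_natural ker_s_modc)

lemma ker_embed_mor: "mf_mor n X aX Y aY (ker_obj, ker_mor, ker_s) (Fo, Fm, s) ker_embed"
  unfolding mf_mor_def prod.case
proof (intro conjI allI ballI impI)
  fix d assume d: "d \<in> objs X"
  show "ker_embed d \<in> homs Y (ker_obj d) (Fo d)"
    by (rule homsI) (auto simp: ker_embed_def ker_obj_def ker_incl_carrier[OF d])
next
  fix d e and f :: "'x \<Rightarrow> 'a mat" assume d: "d \<in> objs X" and e: "e \<in> objs X" and f: "f \<in> homs X d e"
  show "cmp Y (Fm f) (ker_embed d) = cmp Y (ker_embed e) (ker_mor f)"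
  proof (rule graded_eqI)
    fix y assume y: "y \<in> Y"
    have "ker_incl e y * (ker_retr e y * (Fm f y * ker_incl d y)) = Fm f y * ker_incl d y"
      by (rule kernel_retract_section[OF ker_retract[OF e] mult_carrier_mat[OF Fm_carrier[OF d e f] ker_incl_carrier[OF d]]
            Fm_kernel[OF d e f y ker_incl_carrier[OF d] \<theta>_ker_incl[OF d]]])
    then show "cmp Y (Fm f) (ker_embed d) y = cmp Y (ker_embed e) (ker_mor f) y"
      unfolding cmp_at[OF y] ker_embed_at[OF y] ker_mor_at[OF f d e y]
      using ker_retr_carrier[OF e, of y] Fm_carrier[OF d e f, of y] ker_incl_carrier[OF d, of y]
      by (simp add: assoc_mult_mat_dim)
  qed (simp add: cmp_def)
next
  fix g d assume g: "g < n" and d: "d \<in> objs X"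
  let ?gd = "gobj n X aX g d" and ?y' = "\<lambda>y. aY (ginv n g) y"
  note gd = gobj_objs[OF n1 GX, of g d]
  show "cmp Y (s g d) (ker_embed ?gd) = cmp Y (gmor n Y aY g (ker_embed d)) (ker_s g d)"
  proof (rule graded_eqI)
    fix y assume y: "y \<in> Y"
    have "ker_incl d (?y' y) * (ker_retr d (?y' y) * (s g d y * ker_incl ?gd y)) = s g d y * ker_incl ?gd y"
      by (rule kernel_retract_section[OF ker_retract[OF d] mult_carrier_mat[OF s_sinv_at(1)[OF g d y] ker_incl_carrier[OF gd]]
            s_kernel[OF g d y ker_incl_carrier[OF gd] \<theta>_ker_incl[OF gd]]])
    then show "cmp Y (s g d) (ker_embed ?gd) y = cmp Y (gmor n Y aY g (ker_embed d)) (ker_s g d) y"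
      unfolding cmp_at[OF y] ker_embed_at[OF y] gmor_at[OF n1 GY y] ker_embed_at[OF aY_ginv_closed[OF g y]] ker_s_at[OF y]
      using ker_retr_carrier[OF d, of "?y' y"] s_sinv_at(1)[OF g d y] ker_incl_carrier[OF gd, of y]
      by (simp add: assoc_mult_mat_dim)
  qed (simp add: cmp_def)
qed

lemma ker_embed_mono: "mf_mono n X aX PX Y aY PY (ker_obj, ker_mor, ker_s) (Fo, Fm, s) ker_embed"
  unfolding mf_mono_def
proof (intro conjI allI impI ker_embed_mor ballI)
  fix K \<alpha> \<beta> d
  assume a: "mf_mor n X aX Y aY K (ker_obj, ker_mor, ker_s) \<alpha>" and b: "mf_mor n X aX Y aY K (ker_obj, ker_mor, ker_s) \<beta>"
    and eq: "\<forall>d\<in>objs X. cmp Y (ker_embed d) (\<alpha> d) = cmp Y (ker_embed d) (\<beta> d)" and d: "d \<in> objs X"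
  obtain Ko Km Ks where K: "K = (Ko, Km, Ks)" by (cases K)
  have ah: "\<alpha> d \<in> homs Y (Ko d) (ker_obj d)" and bh: "\<beta> d \<in> homs Y (Ko d) (ker_obj d)"
    using a b d unfolding K mf_mor_def by auto
  show "\<alpha> d = \<beta> d"
  proof (rule graded_eqI)
    fix y assume y: "y \<in> Y"
    have ac: "\<alpha> d y \<in> carrier_mat (ker_dim d y) (Ko d y)" and bc: "\<beta> d y \<in> carrier_mat (ker_dim d y) (Ko d y)"
      using homsD[OF ah y] homsD[OF bh y] ker_obj_at[OF y] by simp_all
    have "ker_incl d y * \<alpha> d y = ker_incl d y * \<beta> d y"
      using fun_cong[OF bspec[OF eq d], of y] unfolding cmp_at[OF y] ker_embed_at[OF y] .
    then have "(ker_retr d y * ker_incl d y) * \<alpha> d y = (ker_retr d y * ker_incl d y) * \<beta> d y"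
      using ker_retr_carrier[OF d, of y] ker_incl_carrier[OF d, of y] ac bc by (simp add: assoc_mult_mat_dim)
    then show "\<alpha> d y = \<beta> d y" using ker_retr_incl[OF d, of y] ac bc by simp
  qed (use homs_outside[OF ah] homs_outside[OF bh] in simp)
qed

text \<open>The kernel of \<open>\<theta>\<close> is a module subfunctor of the simple functor.\<close>
theorem simple_endo_zero_or_injective:
  assumes simple: "simple_mf n X aX PX Y aY PY (Fo, Fm, s)"
  shows "(\<forall>d\<in>objs X. \<forall>y\<in>Y. \<theta> d y = 0\<^sub>m (Fo d y) (Fo d y)) \<or>
    (\<forall>d\<in>objs X. \<forall>y\<in>Y. \<forall>c N. N \<in> carrier_mat (Fo d y) c \<longrightarrow> \<theta> d y * N = 0\<^sub>m (Fo d y) c \<longrightarrow> N = 0\<^sub>m (Fo d y) c)"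
proof -
  have "mf_zero X (ker_obj, ker_mor, ker_s) \<or> mf_iso n X aX Y aY (ker_obj, ker_mor, ker_s) (Fo, Fm, s) ker_embed"
    using simple ker_module_functor ker_embed_mono unfolding simple_mf_def by blast
  then show ?thesis
  proof
    assume zero: "mf_zero X (ker_obj, ker_mor, ker_s)"
    have "N = 0\<^sub>m (Fo d y) c"
      if d: "d \<in> objs X" and y: "y \<in> Y" and N: "N \<in> carrier_mat (Fo d y) c" and TN: "\<theta> d y * N = 0\<^sub>m (Fo d y) c"
      for d y c N
    proof -
      have "ker_obj d y = 0" using zero d unfolding mf_zero_def by simp
      then have "ker_dim d y = 0" unfolding ker_obj_at[OF y] .
      then have "ker_incl d y * (ker_retr d y * N) = 0\<^sub>m (Fo d y) c"
        using ker_incl_carrier[OF d, of y] ker_retr_carrier[OF d, of y] N by (intro mult_mat_zero_inner) auto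
      then show ?thesis using kernel_retract_section[OF ker_retract[OF d] N TN] by simp
    qed
    then show ?thesis by blast
  next
    assume "mf_iso n X aX Y aY (ker_obj, ker_mor, ker_s) (Fo, Fm, s) ker_embed"
    then obtain \<phi> where \<phi>: "mf_mor n X aX Y aY (Fo, Fm, s) (ker_obj, ker_mor, ker_s) \<phi>"
      and inv: "\<forall>d\<in>objs X. cmp Y (ker_embed d) (\<phi> d) = idm Y (Fo d)"
      unfolding mf_iso_def by auto
    have "\<theta> d y = 0\<^sub>m (Fo d y) (Fo d y)" if d: "d \<in> objs X" and y: "y \<in> Y" for d y
    proof -
      have "\<phi> d \<in> homs Y (Fo d) (ker_obj d)" using \<phi> d unfolding mf_mor_def by auto
      then have \<phi>c: "\<phi> d y \<in> carrier_mat (ker_dim d y) (Fo d y)" using homsD y ker_obj_at[OF y] by fastforce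
      have "ker_incl d y * \<phi> d y = 1\<^sub>m (Fo d y)"
        using fun_cong[OF bspec[OF inv d], of y] unfolding cmp_at[OF y] ker_embed_at[OF y] idm_at[OF y] .
      then have "\<theta> d y = (\<theta> d y * ker_incl d y) * \<phi> d y"
        using \<theta>_carrier[OF d, of y] ker_incl_carrier[OF d, of y] \<phi>c by (simp add: assoc_mult_mat_dim)
      then show ?thesis using \<theta>_ker_incl[OF d, of y] \<phi>c by simp
    qed
    then show ?thesis by blast
  qed
qed

end

section \<open>Endomorphisms from compatible families of matrices\<close>

context cyclic_module_functor
begin

text \<open>The multiplicity \<open>m\<^sup>F\<^sub>x\<^sub>y\<close> of the statement, see \<open>hom_dim_simple_obj\<close>.\<close>
definition "mult_F x y = Fo (simple_obj x) y"

definition compatible_family :: "('x \<Rightarrow> 'y \<Rightarrow> 'a mat) \<Rightarrow> bool" where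
  "compatible_family E \<longleftrightarrow> (\<forall>x\<in>X. \<forall>y\<in>Y. E x y \<in> carrier_mat (mult_F x y) (mult_F x y)) \<and>
     (\<forall>g<n. \<forall>x\<in>X. \<forall>y\<in>Y. s g (simple_obj x) y * E (aX g x) y = E x (aY (ginv n g) y) * s g (simple_obj x) y)"

definition family_endo :: "('x \<Rightarrow> 'y \<Rightarrow> 'a mat) \<Rightarrow> ('x \<Rightarrow> nat) \<Rightarrow> ('y \<Rightarrow> 'a mat)" where
  "family_endo E d = (\<lambda>y. if y \<in> Y then mat_sum (Fo d y) (Fo d y) (Sigma X (\<lambda>x. {..<d x}))
     (\<lambda>(x, j). Fm (summand_incl X d x j) y * E x y * Fm (summand_proj X d x j) y) else 0\<^sub>m 0 0)"

lemma family_endo_at: "y \<in> Y \<Longrightarrow> family_endo E d y = mat_sum (Fo d y) (Fo d y) (Sigma X (\<lambda>x. {..<d x}))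
    (\<lambda>(x, j). Fm (summand_incl X d x j) y * E x y * Fm (summand_proj X d x j) y)"
  unfolding family_endo_def by simp

lemma Fm_summand_incl_carrier: "d \<in> objs X \<Longrightarrow> x \<in> X \<Longrightarrow> Fm (summand_incl X d x j) y \<in> carrier_mat (Fo d y) (mult_F x y)"
  and Fm_summand_proj_carrier: "d \<in> objs X \<Longrightarrow> x \<in> X \<Longrightarrow> Fm (summand_proj X d x j) y \<in> carrier_mat (mult_F x y) (Fo d y)"
  unfolding mult_F_def
  by (rule Fm_carrier[OF simple_obj_objs _ summand_incl_homs], assumption+)
    (rule Fm_carrier[OF _ simple_obj_objs summand_proj_homs], assumption+)

lemma s_simple_obj_carrier: "g < n \<Longrightarrow> x \<in> X \<Longrightarrow> y \<in> Y \<Longrightarrow>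
    s g (simple_obj x) y \<in> carrier_mat (mult_F x (aY (ginv n g) y)) (mult_F (aX g x) y)"
  using s_sinv_at(1)[OF _ simple_obj_objs, of g x y] gobj_simple_obj[OF n1 GX, of g x] unfolding mult_F_def by simp

lemma Fm_mult_summand_incl:
  assumes d: "d \<in> objs X" and e: "e \<in> objs X" and f: "f \<in> homs X d e" and x: "x \<in> X"
    and j: "j < d x" and y: "y \<in> Y"
  shows "Fm f y * Fm (summand_incl X d x j) y
    = mat_sum (Fo e y) (mult_F x y) {..<e x} (\<lambda>i. f x $$ (i, j) \<cdot>\<^sub>m Fm (summand_incl X e x i) y)"
proof -
  have sx: "simple_obj x \<in> objs X" by (rule simple_obj_objs[OF x])
  have "Fm f y * Fm (summand_incl X d x j) y = Fm (cmp X f (summand_incl X d x j)) y"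
    unfolding F_cmp[OF sx d e summand_incl_homs[OF x] f] cmp_at[OF y] ..
  also have "\<dots> = mat_sum (Fo e y) (mult_F x y) {..<e x}
      (\<lambda>i. Fm (smultm X (f x $$ (i, j)) (summand_incl X e x i)) y)"
    unfolding cmp_summand_incl[OF f x j] mult_F_def
      F_hom_sum[OF finite_lessThan sx e smultm_homs[OF summand_incl_homs[OF x]]] hom_sum_at[OF y] ..
  finally show ?thesis
    by (simp add: F_smultm[OF sx e summand_incl_homs[OF x]] smultm_at[OF y])
qed

lemma Fm_summand_proj_mult:
  assumes d: "d \<in> objs X" and e: "e \<in> objs X" and f: "f \<in> homs X d e" and x: "x \<in> X"
    and i: "i < e x" and y: "y \<in> Y"
  shows "Fm (summand_proj X e x i) y * Fm f y
    = mat_sum (mult_F x y) (Fo d y) {..<d x} (\<lambda>j. f x $$ (i, j) \<cdot>\<^sub>m Fm (summand_proj X d x j) y)"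
proof -
  have sx: "simple_obj x \<in> objs X" by (rule simple_obj_objs[OF x])
  have "Fm (summand_proj X e x i) y * Fm f y = Fm (cmp X (summand_proj X e x i) f) y"
    unfolding F_cmp[OF d e sx f summand_proj_homs[OF x]] cmp_at[OF y] ..
  also have "\<dots> = mat_sum (mult_F x y) (Fo d y) {..<d x}
      (\<lambda>j. Fm (smultm X (f x $$ (i, j)) (summand_proj X d x j)) y)"
    unfolding summand_proj_cmp[OF f x i] mult_F_def
      F_hom_sum[OF finite_lessThan d sx smultm_homs[OF summand_proj_homs[OF x]]] hom_sum_at[OF y] ..
  finally show ?thesis
    by (simp add: F_smultm[OF d sx summand_proj_homs[OF x]] smultm_at[OF y])
qed

lemma Fm_mult_family_endo:
  assumes fin: "finite X" and E: "\<And>x. x \<in> X \<Longrightarrow> E x y \<in> carrier_mat (mult_F x y) (mult_F x y)"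
    and d: "d \<in> objs X" and e: "e \<in> objs X" and f: "f \<in> homs X d e" and y: "y \<in> Y"
  shows "Fm f y * family_endo E d y = mat_sum (Fo e y) (Fo d y) X (\<lambda>x. mat_sum (Fo e y) (Fo d y) {..<d x}
    (\<lambda>j. mat_sum (Fo e y) (Fo d y) {..<e x}
      (\<lambda>i. f x $$ (i, j) \<cdot>\<^sub>m (Fm (summand_incl X e x i) y * E x y * Fm (summand_proj X d x j) y))))"
proof -
  note Ff = Fm_carrier[OF d e f, of y]
  have "Fm f y * family_endo E d y = mat_sum (Fo e y) (Fo d y) X (\<lambda>x. mat_sum (Fo e y) (Fo d y) {..<d x}
      (\<lambda>j. Fm f y * (Fm (summand_incl X d x j) y * E x y * Fm (summand_proj X d x j) y)))"
    unfolding family_endo_at[OF y]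
    by (subst mult_mat_sum_left[OF Ff])
      (auto intro!: mult_carrier_mat Fm_summand_incl_carrier[OF d] Fm_summand_proj_carrier[OF d] E
        simp: mat_sum_Sigma[OF fin])
  also have "\<dots> = mat_sum (Fo e y) (Fo d y) X (\<lambda>x. mat_sum (Fo e y) (Fo d y) {..<d x}
    (\<lambda>j. mat_sum (Fo e y) (Fo d y) {..<e x}
      (\<lambda>i. f x $$ (i, j) \<cdot>\<^sub>m (Fm (summand_incl X e x i) y * E x y * Fm (summand_proj X d x j) y))))"
  proof (intro mat_sum_cong)
    fix x j assume x: "x \<in> X" and j: "j \<in> {..<d x}"
    note I = Fm_summand_incl_carrier[OF d x, of j y] and Ex = E[OF x] and P = Fm_summand_proj_carrier[OF d x, of j y]
    have I': "Fm (summand_incl X e x i) y \<in> carrier_mat (Fo e y) (mult_F x y)" for i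
      by (rule Fm_summand_incl_carrier[OF e x])
    have "Fm f y * (Fm (summand_incl X d x j) y * E x y * Fm (summand_proj X d x j) y)
      = Fm f y * Fm (summand_incl X d x j) y * E x y * Fm (summand_proj X d x j) y"
      using Ff I Ex P by (simp add: assoc_mult_mat_dim)
    also have "\<dots> = mat_sum (Fo e y) (mult_F x y) {..<e x} (\<lambda>i. f x $$ (i, j) \<cdot>\<^sub>m Fm (summand_incl X e x i) y)
        * E x y * Fm (summand_proj X d x j) y"
      using j by (simp add: Fm_mult_summand_incl[OF d e f x _ y])
    also have "\<dots> = mat_sum (Fo e y) (Fo d y) {..<e x}
        (\<lambda>i. (f x $$ (i, j) \<cdot>\<^sub>m Fm (summand_incl X e x i) y) * E x y * Fm (summand_proj X d x j) y)"
      using I' by (subst mult_mat_sum_right[OF Ex], simp, subst mult_mat_sum_right[OF P])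
        (auto intro!: mult_carrier_mat Ex)
    also have "\<dots> = mat_sum (Fo e y) (Fo d y) {..<e x}
        (\<lambda>i. f x $$ (i, j) \<cdot>\<^sub>m (Fm (summand_incl X e x i) y * E x y * Fm (summand_proj X d x j) y))"
      by (rule mat_sum_cong)
        (use carrier_matD[OF I'] carrier_matD[OF Ex] carrier_matD[OF P] in \<open>simp add: mult_smult_assoc_mat_dim\<close>)
    finally show "Fm f y * (Fm (summand_incl X d x j) y * E x y * Fm (summand_proj X d x j) y)
      = mat_sum (Fo e y) (Fo d y) {..<e x}
        (\<lambda>i. f x $$ (i, j) \<cdot>\<^sub>m (Fm (summand_incl X e x i) y * E x y * Fm (summand_proj X d x j) y))" .
  qed
  finally show ?thesis .
qed

lemma family_endo_mult_Fm:
  assumes fin: "finite X" and E: "\<And>x. x \<in> X \<Longrightarrow> E x y \<in> carrier_mat (mult_F x y) (mult_F x y)"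
    and d: "d \<in> objs X" and e: "e \<in> objs X" and f: "f \<in> homs X d e" and y: "y \<in> Y"
  shows "family_endo E e y * Fm f y = mat_sum (Fo e y) (Fo d y) X (\<lambda>x. mat_sum (Fo e y) (Fo d y) {..<e x}
    (\<lambda>i. mat_sum (Fo e y) (Fo d y) {..<d x}
      (\<lambda>j. f x $$ (i, j) \<cdot>\<^sub>m (Fm (summand_incl X e x i) y * E x y * Fm (summand_proj X d x j) y))))"
proof -
  note Ff = Fm_carrier[OF d e f, of y]
  have "family_endo E e y * Fm f y = mat_sum (Fo e y) (Fo d y) X (\<lambda>x. mat_sum (Fo e y) (Fo d y) {..<e x}
      (\<lambda>i. (Fm (summand_incl X e x i) y * E x y * Fm (summand_proj X e x i) y) * Fm f y))"
    unfolding family_endo_at[OF y]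
    by (subst mult_mat_sum_right[OF Ff])
      (auto intro!: mult_carrier_mat Fm_summand_incl_carrier[OF e] Fm_summand_proj_carrier[OF e] E
        simp: mat_sum_Sigma[OF fin])
  also have "\<dots> = mat_sum (Fo e y) (Fo d y) X (\<lambda>x. mat_sum (Fo e y) (Fo d y) {..<e x}
    (\<lambda>i. mat_sum (Fo e y) (Fo d y) {..<d x}
      (\<lambda>j. f x $$ (i, j) \<cdot>\<^sub>m (Fm (summand_incl X e x i) y * E x y * Fm (summand_proj X d x j) y))))"
  proof (intro mat_sum_cong)
    fix x i assume x: "x \<in> X" and i: "i \<in> {..<e x}"
    note I = Fm_summand_incl_carrier[OF e x, of i y] and Ex = E[OF x] and P = Fm_summand_proj_carrier[OF e x, of i y]
    have P': "Fm (summand_proj X d x j) y \<in> carrier_mat (mult_F x y) (Fo d y)" for j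
      by (rule Fm_summand_proj_carrier[OF d x])
    have "(Fm (summand_incl X e x i) y * E x y * Fm (summand_proj X e x i) y) * Fm f y
      = (Fm (summand_incl X e x i) y * E x y) * (Fm (summand_proj X e x i) y * Fm f y)"
      using Ff I Ex P by (simp add: assoc_mult_mat_dim)
    also have "\<dots> = mat_sum (Fo e y) (Fo d y) {..<d x}
        (\<lambda>j. (Fm (summand_incl X e x i) y * E x y) * (f x $$ (i, j) \<cdot>\<^sub>m Fm (summand_proj X d x j) y))"
      using i I Ex P'
      by (simp add: Fm_summand_proj_mult[OF d e f x _ y] mult_mat_sum_left[OF mult_carrier_mat[OF I Ex]])
    also have "\<dots> = mat_sum (Fo e y) (Fo d y) {..<d x}
        (\<lambda>j. f x $$ (i, j) \<cdot>\<^sub>m (Fm (summand_incl X e x i) y * E x y * Fm (summand_proj X d x j) y))"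
      by (rule mat_sum_cong)
        (use carrier_matD[OF I] carrier_matD[OF Ex] carrier_matD[OF P'] in \<open>simp add: mult_smult_distrib_dim\<close>)
    finally show "(Fm (summand_incl X e x i) y * E x y * Fm (summand_proj X e x i) y) * Fm f y
      = mat_sum (Fo e y) (Fo d y) {..<d x}
        (\<lambda>j. f x $$ (i, j) \<cdot>\<^sub>m (Fm (summand_incl X e x i) y * E x y * Fm (summand_proj X d x j) y))" .
  qed
  finally show ?thesis .
qed

lemma family_endo_natural:
  assumes fin: "finite X" and E: "\<And>x. x \<in> X \<Longrightarrow> E x y \<in> carrier_mat (mult_F x y) (mult_F x y)"
    and d: "d \<in> objs X" and e: "e \<in> objs X" and f: "f \<in> homs X d e" and y: "y \<in> Y"
  shows "Fm f y * family_endo E d y = family_endo E e y * Fm f y"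
proof -
  have "Fm f y * family_endo E d y = mat_sum (Fo e y) (Fo d y) X (\<lambda>x. mat_sum (Fo e y) (Fo d y) {..<d x}
    (\<lambda>j. mat_sum (Fo e y) (Fo d y) {..<e x}
      (\<lambda>i. f x $$ (i, j) \<cdot>\<^sub>m (Fm (summand_incl X e x i) y * E x y * Fm (summand_proj X d x j) y))))"
    by (rule Fm_mult_family_endo[where E = E and y = y, OF fin E d e f y])
  also have "\<dots> = mat_sum (Fo e y) (Fo d y) X (\<lambda>x. mat_sum (Fo e y) (Fo d y) {..<e x}
    (\<lambda>i. mat_sum (Fo e y) (Fo d y) {..<d x}
      (\<lambda>j. f x $$ (i, j) \<cdot>\<^sub>m (Fm (summand_incl X e x i) y * E x y * Fm (summand_proj X d x j) y))))"
    by (rule mat_sum_cong, rule mat_sum_swap)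
  also have "\<dots> = family_endo E e y * Fm f y"
    by (rule family_endo_mult_Fm[where E = E and y = y, OF fin E d e f y, symmetric])
  finally show ?thesis .
qed

lemma compatible_familyD:
  assumes "compatible_family E"
  shows "x \<in> X \<Longrightarrow> y \<in> Y \<Longrightarrow> E x y \<in> carrier_mat (mult_F x y) (mult_F x y)"
    "g < n \<Longrightarrow> x \<in> X \<Longrightarrow> y \<in> Y \<Longrightarrow>
      s g (simple_obj x) y * E (aX g x) y = E x (aY (ginv n g) y) * s g (simple_obj x) y"
  using assms unfolding compatible_family_def by blast+

lemma s_mult_summand_term:
  assumes E: "compatible_family E" and g: "g < n" and d: "d \<in> objs X" and x: "x \<in> X" and y: "y \<in> Y"
  defines "gd \<equiv> gobj n X aX g d" and "y' \<equiv> aY (ginv n g) y"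
  shows "s g d y * (Fm (summand_incl X gd (aX g x) j) y * E (aX g x) y * Fm (summand_proj X gd (aX g x) j) y)
    = (Fm (summand_incl X d x j) y' * E x y' * Fm (summand_proj X d x j) y') * s g d y"
proof -
  let ?I = "summand_incl X d x j" and ?P = "summand_proj X d x j" and ?x = "simple_obj x"
  have sx: "?x \<in> objs X" by (rule simple_obj_objs[OF x])
  have gx: "aX g x \<in> X" by (rule act_closed[OF n1 GX g x])
  have gsx: "gobj n X aX g ?x = simple_obj (aX g x)" by (rule gobj_simple_obj[OF n1 GX g x])
  have I: "?I \<in> homs X ?x d" and P: "?P \<in> homs X d ?x"
    by (rule summand_incl_homs[OF x], rule summand_proj_homs[OF x])
  have gI: "summand_incl X gd (aX g x) j = gmor n X aX g ?I" and gP: "summand_proj X gd (aX g x) j = gmor n X aX g ?P"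
    unfolding gd_def by (rule gmor_summand_incl[OF n1 GX g x, symmetric], rule gmor_summand_proj[OF n1 GX g x, symmetric])
  have gd: "gd \<in> objs X" unfolding gd_def by (rule gobj_objs[OF n1 GX])
  note S = s_sinv_at(1)[OF g d y, folded gd_def y'_def] and Sx = s_simple_obj_carrier[OF g x y, folded y'_def]
    and FI = Fm_summand_incl_carrier[OF d x, of j y'] and FP = Fm_summand_proj_carrier[OF d x, of j y']
    and FgI = Fm_summand_incl_carrier[OF gd gx, of j y] and FgP = Fm_summand_proj_carrier[OF gd gx, of j y]
    and E1 = compatible_familyD(1)[OF E gx y] and E2 = compatible_familyD(1)[OF E x aY_ginv_closed[OF g y, folded y'_def]]
  have nI: "Fm ?I y' * s g ?x y = s g d y * Fm (gmor n X aX g ?I) y"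
    using fun_cong[OF s_natural[OF g sx d I], of y] unfolding cmp_at[OF y] gmor_at[OF n1 GY y] y'_def .
  have nP: "Fm ?P y' * s g d y = s g ?x y * Fm (gmor n X aX g ?P) y"
    using fun_cong[OF s_natural[OF g d sx P], of y] unfolding cmp_at[OF y] gmor_at[OF n1 GY y] y'_def .
  have "s g d y * (Fm (gmor n X aX g ?I) y * E (aX g x) y * Fm (gmor n X aX g ?P) y)
      = (s g d y * Fm (gmor n X aX g ?I) y) * E (aX g x) y * Fm (gmor n X aX g ?P) y"
    unfolding gI[symmetric] gP[symmetric] using S FgI FgP E1 by (simp add: assoc_mult_mat_dim)
  also have "\<dots> = Fm ?I y' * (s g ?x y * E (aX g x) y) * Fm (gmor n X aX g ?P) y"
    unfolding nI[symmetric] gP[symmetric] using FI Sx E1 by (simp add: assoc_mult_mat_dim)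
  also have "\<dots> = Fm ?I y' * E x y' * (s g ?x y * Fm (gmor n X aX g ?P) y)"
    unfolding compatible_familyD(2)[OF E g x y, folded y'_def] gP[symmetric] using FI Sx FgP E2
    by (simp add: assoc_mult_mat_dim)
  also have "\<dots> = (Fm ?I y' * E x y' * Fm ?P y') * s g d y"
    unfolding nP[symmetric] using FI FP E2 S by (simp add: assoc_mult_mat_dim)
  finally show ?thesis unfolding gI gP .
qed

lemma family_endo_s:
  assumes fin: "finite X" and E: "compatible_family E" and g: "g < n" and d: "d \<in> objs X" and y: "y \<in> Y"
  shows "s g d y * family_endo E (gobj n X aX g d) y = family_endo E d (aY (ginv n g) y) * s g d y"
proof -
  let ?gd = "gobj n X aX g d" and ?y' = "aY (ginv n g) y"
  let ?t = "\<lambda>d y (x, j). Fm (summand_incl X d x j) y * E x y * Fm (summand_proj X d x j) y"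
  have gd: "?gd \<in> objs X" by (rule gobj_objs[OF n1 GX])
  have y': "?y' \<in> Y" by (rule aY_ginv_closed[OF g y])
  note S = s_sinv_at(1)[OF g d y] and Ec = compatible_familyD(1)[OF E]
  have "s g d y * family_endo E ?gd y = mat_sum (Fo d ?y') (Fo ?gd y) (Sigma X (\<lambda>x. {..<?gd x}))
      (\<lambda>p. s g d y * ?t ?gd y p)"
    unfolding family_endo_at[OF y]
    by (rule mult_mat_sum_left[OF S])
      (auto intro!: mult_carrier_mat Fm_summand_incl_carrier[OF gd] Fm_summand_proj_carrier[OF gd] Ec y)
  also have "\<dots> = mat_sum (Fo d ?y') (Fo ?gd y) (Sigma X (\<lambda>x. {..<d x}))
      ((\<lambda>p. s g d y * ?t ?gd y p) \<circ> (\<lambda>(x, j). (aX g x, j)))"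
    unfolding Sigma_gobj[OF n1 GX g] by (rule mat_sum_reindex[OF inj_on_act_Sigma[OF n1 GX g]])
  also have "\<dots> = mat_sum (Fo d ?y') (Fo ?gd y) (Sigma X (\<lambda>x. {..<d x})) (\<lambda>p. ?t d ?y' p * s g d y)"
    by (rule mat_sum_cong) (auto simp: s_mult_summand_term[OF E g d _ y])
  also have "\<dots> = family_endo E d ?y' * s g d y"
    unfolding family_endo_at[OF y']
    by (rule mult_mat_sum_right[symmetric, OF S])
      (auto intro!: mult_carrier_mat Fm_summand_incl_carrier[OF d] Fm_summand_proj_carrier[OF d] Ec y')
  finally show ?thesis .
qed

lemma family_endo_mor:
  assumes fin: "finite X" and E: "compatible_family E"
  shows "mf_mor n X aX Y aY (Fo, Fm, s) (Fo, Fm, s) (family_endo E)"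
  unfolding mf_mor_def prod.case
proof (intro conjI ballI allI impI)
  fix d assume d: "d \<in> objs X"
  show "family_endo E d \<in> homs Y (Fo d) (Fo d)" by (rule homsI) (auto simp: family_endo_def)
next
  fix d e and f :: "'x \<Rightarrow> 'a mat" assume d: "d \<in> objs X" and e: "e \<in> objs X" and f: "f \<in> homs X d e"
  show "cmp Y (Fm f) (family_endo E d) = cmp Y (family_endo E e) (Fm f)"
  proof (rule graded_eqI)
    fix y assume y: "y \<in> Y"
    show "cmp Y (Fm f) (family_endo E d) y = cmp Y (family_endo E e) (Fm f) y"
      unfolding cmp_at[OF y] using compatible_familyD(1)[OF E _ y]
      by (intro family_endo_natural[OF fin _ d e f y]) simp
  qed (simp add: cmp_def)
next
  fix g d assume g: "g < n" and d: "d \<in> objs X"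
  show "cmp Y (s g d) (family_endo E (gobj n X aX g d)) = cmp Y (gmor n Y aY g (family_endo E d)) (s g d)"
  proof (rule graded_eqI)
    fix y assume y: "y \<in> Y"
    show "cmp Y (s g d) (family_endo E (gobj n X aX g d)) y = cmp Y (gmor n Y aY g (family_endo E d)) (s g d) y"
      unfolding cmp_at[OF y] gmor_at[OF n1 GY y] by (rule family_endo_s[OF fin E g d y])
  qed (simp add: cmp_def)
qed

lemma family_endo_simple_obj:
  assumes x: "x \<in> X" and y: "y \<in> Y" and Ec: "E x y \<in> carrier_mat (mult_F x y) (mult_F x y)"
  shows "family_endo E (simple_obj x) y = E x y"
proof -
  have sx: "simple_obj x \<in> objs X" by (rule simple_obj_objs[OF x])
  have "Fm (idm X (simple_obj x)) y = 1\<^sub>m (mult_F x y)"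
    unfolding F_idm[OF sx] idm_at[OF y] mult_F_def ..
  then have "Fm (summand_incl X (simple_obj x) x 0) y * E x y * Fm (summand_proj X (simple_obj x) x 0) y = E x y"
    unfolding summand_incl_simple_obj[OF x] summand_proj_simple_obj[OF x] using Ec by simp
  then show ?thesis
    unfolding family_endo_at[OF y] Sigma_simple_obj[OF x] using Ec by (simp add: mat_sum_singleton mult_F_def)
qed

lemma Fm_summand_decomp:
  assumes fin: "finite X" and d: "d \<in> objs X" and y: "y \<in> Y"
  shows "1\<^sub>m (Fo d y) = mat_sum (Fo d y) (Fo d y) (Sigma X (\<lambda>x. {..<d x}))
    (\<lambda>(x, j). Fm (summand_incl X d x j) y * Fm (summand_proj X d x j) y)"
proof -
  have homs: "(case p of (x, j) \<Rightarrow> cmp X (summand_incl X d x j) (summand_proj X d x j)) \<in> homs X d d"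
    if "p \<in> Sigma X (\<lambda>x. {..<d x})" for p
    using that cmp_homs[OF summand_proj_homs summand_incl_homs] by auto
  have "1\<^sub>m (Fo d y) = Fm (idm X d) y" unfolding F_idm[OF d] idm_at[OF y] ..
  also have "\<dots> = mat_sum (Fo d y) (Fo d y) (Sigma X (\<lambda>x. {..<d x}))
      (\<lambda>p. Fm (case p of (x, j) \<Rightarrow> cmp X (summand_incl X d x j) (summand_proj X d x j)) y)"
    by (subst idm_summand_decomp[OF fin d], subst F_hom_sum[OF _ d d homs])
      (use fin in \<open>simp_all add: hom_sum_at[OF y]\<close>)
  also have "\<dots> = mat_sum (Fo d y) (Fo d y) (Sigma X (\<lambda>x. {..<d x}))
      (\<lambda>(x, j). Fm (summand_incl X d x j) y * Fm (summand_proj X d x j) y)"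
    by (rule mat_sum_cong) (auto simp: F_cmp[OF d simple_obj_objs d summand_proj_homs summand_incl_homs] cmp_at[OF y])
  finally show ?thesis .
qed

lemma nonzero_mult_F_exists:
  assumes fin: "finite X" and nz: "\<not> mf_zero X (Fo, Fm, s)"
  shows "\<exists>x\<in>X. \<exists>y\<in>Y. mult_F x y \<noteq> 0"
proof (rule ccontr)
  assume "\<not> (\<exists>x\<in>X. \<exists>y\<in>Y. mult_F x y \<noteq> 0)"
  then have zero: "\<And>x y. x \<in> X \<Longrightarrow> y \<in> Y \<Longrightarrow> mult_F x y = 0" by blast
  from nz obtain d y where d: "d \<in> objs X" and dy: "Fo d y \<noteq> 0" unfolding mf_zero_def by auto
  have y: "y \<in> Y" using F_obj[OF d] dy unfolding objs_def by auto
  \<comment> \<open>every summand factors through \<open>F x\<close>, which vanishes at \<open>y\<close>\<close>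
  have "1\<^sub>m (Fo d y) = (0\<^sub>m (Fo d y) (Fo d y) :: 'a mat)"
    unfolding Fm_summand_decomp[OF fin d y]
  proof (rule mat_sum_zero)
    fix p assume "p \<in> Sigma X (\<lambda>x. {..<d x})"
    then obtain x j where p: "p = (x, j)" and x: "x \<in> X" by auto
    show "(case p of (x, j) \<Rightarrow> Fm (summand_incl X d x j) y * Fm (summand_proj X d x j) y) = 0\<^sub>m (Fo d y) (Fo d y)"
      unfolding p prod.case using Fm_summand_incl_carrier[OF d x, of j y] Fm_summand_proj_carrier[OF d x, of j y]
      by (intro mult_mat_zero_inner) (simp_all add: zero[OF x y])
  qed
  from one_mat_eq_zero_mat[OF this] show False using dy by simp
qed

lemma compatible_family_zero_or_injective:
  assumes simple: "simple_mf n X aX PX Y aY PY (Fo, Fm, s)" and fin: "finite X" and E: "compatible_family E"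
  shows "(\<forall>x\<in>X. \<forall>y\<in>Y. E x y = 0\<^sub>m (mult_F x y) (mult_F x y)) \<or>
    (\<forall>x\<in>X. \<forall>y\<in>Y. \<forall>c N. N \<in> carrier_mat (mult_F x y) c \<longrightarrow> E x y * N = 0\<^sub>m (mult_F x y) c \<longrightarrow> N = 0\<^sub>m (mult_F x y) c)"
proof -
  interpret endo: cyclic_module_functor_endo n X aX PX Y aY PY Fo Fm s "family_endo E"
    by unfold_locales (rule n1 GX GY MF family_endo_mor[OF fin E])+
  have simple_E: "family_endo E (simple_obj x) y = E x y" if "x \<in> X" "y \<in> Y" for x y
    using family_endo_simple_obj[where E = E, OF that compatible_familyD(1)[OF E that]] .
  from endo.simple_endo_zero_or_injective[OF simple] show ?thesis
  proof (elim disjE)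
    assume "\<forall>d\<in>objs X. \<forall>y\<in>Y. family_endo E d y = 0\<^sub>m (Fo d y) (Fo d y)"
    then have "E x y = 0\<^sub>m (mult_F x y) (mult_F x y)" if "x \<in> X" "y \<in> Y" for x y
      using that simple_obj_objs[OF that(1)] simple_E[OF that] unfolding mult_F_def by auto
    then show ?thesis by blast
  next
    assume inj: "\<forall>d\<in>objs X. \<forall>y\<in>Y. \<forall>c N. N \<in> carrier_mat (Fo d y) c \<longrightarrow>
      family_endo E d y * N = 0\<^sub>m (Fo d y) c \<longrightarrow> N = 0\<^sub>m (Fo d y) c"
    have "N = 0\<^sub>m (mult_F x y) c"
      if "x \<in> X" "y \<in> Y" "N \<in> carrier_mat (mult_F x y) c" "E x y * N = 0\<^sub>m (mult_F x y) c" for x y c N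
      using that inj[rule_format, OF simple_obj_objs[OF that(1)] that(2)] simple_E[OF that(1,2)]
      unfolding mult_F_def by simp
    then show ?thesis by blast
  qed
qed

end

section \<open>Multiplicities\<close>

context cyclic_module_functor
begin

definition orbit :: "'x \<Rightarrow> 'y \<Rightarrow> ('x \<times> 'y) set" where
  "orbit x0 y0 = {(aX a x0, aY a y0) | a. a < n}"

lemma orbit_self: "x0 \<in> X \<Longrightarrow> y0 \<in> Y \<Longrightarrow> (x0, y0) \<in> orbit x0 y0"
  unfolding orbit_def using n1 act_zero[OF n1 GX] act_zero[OF n1 GY]
  by (auto intro!: exI[of _ 0])

lemma orbit_shift:
  assumes g: "g < n" and x: "x \<in> X" and y: "y \<in> Y" and x0: "x0 \<in> X" and y0: "y0 \<in> Y"
  shows "(aX g x, y) \<in> orbit x0 y0 \<longleftrightarrow> (x, aY (ginv n g) y) \<in> orbit x0 y0"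
proof
  assume "(aX g x, y) \<in> orbit x0 y0"
  then obtain a where a: "a < n" and ax: "aX g x = aX a x0" and ay: "y = aY a y0" unfolding orbit_def by auto
  have gi: "ginv n g < n" by (rule ginv_lt[OF n1])
  have "aX ((ginv n g + a) mod n) x0 = x"
    using act_add[OF n1 GX gi a x0] ax[symmetric] ginv_act[OF n1 GX g x] by simp
  moreover have "aY ((ginv n g + a) mod n) y0 = aY (ginv n g) y" using act_add[OF n1 GY gi a y0] ay by simp
  ultimately show "(x, aY (ginv n g) y) \<in> orbit x0 y0" unfolding orbit_def using n1 by force
next
  assume "(x, aY (ginv n g) y) \<in> orbit x0 y0"
  then obtain b where b: "b < n" and bx: "x = aX b x0" and "aY (ginv n g) y = aY b y0" unfolding orbit_def by auto
  then have "aY ((g + b) mod n) y0 = y" using act_add[OF n1 GY g b y0] act_ginv[OF n1 GY g y] by metis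
  moreover have "aX ((g + b) mod n) x0 = aX g x" using act_add[OF n1 GX g b x0] bx by simp
  ultimately show "(aX g x, y) \<in> orbit x0 y0" unfolding orbit_def using n1 by force
qed

theorem mult_F_orbit_support:
  assumes simple: "simple_mf n X aX PX Y aY PY (Fo, Fm, s)" and fin: "finite X"
    and x0: "x0 \<in> X" and y0: "y0 \<in> Y" and nz: "mult_F x0 y0 \<noteq> 0"
    and x: "x \<in> X" and y: "y \<in> Y" and off: "(x, y) \<notin> orbit x0 y0"
  shows "mult_F x y = 0"
proof -
  \<comment> \<open>the indicator of the orbit is a compatible family\<close>
  define E :: "'x \<Rightarrow> 'y \<Rightarrow> 'a mat" where
    "E x y = (if (x, y) \<in> orbit x0 y0 then 1\<^sub>m (mult_F x y) else 0\<^sub>m (mult_F x y) (mult_F x y))" for x y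
  have "compatible_family E"
    unfolding compatible_family_def
  proof (intro conjI ballI allI impI)
    fix g x y assume g: "g < n" and x: "x \<in> X" and y: "y \<in> Y"
    show "s g (simple_obj x) y * E (aX g x) y = E x (aY (ginv n g) y) * s g (simple_obj x) y"
      using s_simple_obj_carrier[OF g x y] orbit_shift[OF g x y x0 y0] unfolding E_def by auto
  qed (simp add: E_def)
  from compatible_family_zero_or_injective[OF simple fin this] show ?thesis
  proof
    assume "\<forall>x\<in>X. \<forall>y\<in>Y. E x y = 0\<^sub>m (mult_F x y) (mult_F x y)"
    then have "E x0 y0 = 0\<^sub>m (mult_F x0 y0) (mult_F x0 y0)" using x0 y0 by blast
    then have "(1\<^sub>m (mult_F x0 y0) :: 'a mat) = 0\<^sub>m (mult_F x0 y0) (mult_F x0 y0)"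
      using orbit_self[OF x0 y0] unfolding E_def by simp
    from one_mat_eq_zero_mat[OF this] show ?thesis using nz by simp
  next
    assume inj: "\<forall>x\<in>X. \<forall>y\<in>Y. \<forall>c N. N \<in> carrier_mat (mult_F x y) c \<longrightarrow>
      E x y * N = 0\<^sub>m (mult_F x y) c \<longrightarrow> N = 0\<^sub>m (mult_F x y) c"
    have "E x y * 1\<^sub>m (mult_F x y) = 0\<^sub>m (mult_F x y) (mult_F x y)"
      using off unfolding E_def by simp
    then have "(1\<^sub>m (mult_F x y) :: 'a mat) = 0\<^sub>m (mult_F x y) (mult_F x y)"
      by (rule inj[rule_format, OF x y one_carrier_mat])
    then show ?thesis by (rule one_mat_eq_zero_mat)
  qed
qed

lemma sinv_simple_obj_at:
  assumes g: "g < n" and x: "x \<in> X" and y: "y \<in> Y"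
  shows "sinv g (simple_obj x) y \<in> carrier_mat (mult_F (aX g x) y) (mult_F x (aY (ginv n g) y))"
    "sinv g (simple_obj x) y * s g (simple_obj x) y = 1\<^sub>m (mult_F (aX g x) y)"
    "s g (simple_obj x) y * sinv g (simple_obj x) y = 1\<^sub>m (mult_F x (aY (ginv n g) y))"
  using s_sinv_at(2,3,4)[OF g simple_obj_objs[OF x] y] gobj_simple_obj[OF n1 GX g x]
  unfolding mult_F_def by simp_all

lemma modc_simple_obj:
  assumes g: "g < n" and h: "h < n" and x: "x \<in> X"
  shows "modc n X aX PX g h (simple_obj x)
    = smultm X (PX g h (aX ((g + h) mod n) x)) (idm X (simple_obj (aX ((g + h) mod n) x)))"
proof -
  have "gobj n X aX ((g + h) mod n) (simple_obj x) = simple_obj (aX ((g + h) mod n) x)"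
    using gobj_simple_obj[OF n1 GX _ x, of "(g + h) mod n"] n1 by simp
  then show ?thesis
    unfolding modc_def smultm_def idm_def by (auto intro!: ext eq_matI simp: simple_obj_def)
qed

lemma s_simple_obj_add:
  assumes g: "g < n" and h: "h < n" and x: "x \<in> X" and y: "y \<in> Y"
  shows "PY g h y \<cdot>\<^sub>m s ((g + h) mod n) (simple_obj x) y
    = PX g h (aX ((g + h) mod n) x) \<cdot>\<^sub>m (s h (simple_obj x) (aY (ginv n g) y) * s g (simple_obj (aX h x)) y)"
proof -
  let ?gh = "(g + h) mod n"
  have ghx: "aX ?gh x \<in> X" using act_closed[OF n1 GX _ x, of ?gh] n1 by simp
  have sghx: "simple_obj (aX ?gh x) \<in> objs X" by (rule simple_obj_objs[OF ghx])
  have "Fm (modc n X aX PX g h (simple_obj x)) y = PX g h (aX ?gh x) \<cdot>\<^sub>m 1\<^sub>m (mult_F (aX ?gh x) y)"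
    unfolding modc_simple_obj[OF g h x] F_smultm[OF sghx sghx idm_homs] F_idm[OF sghx]
      smultm_at[OF y] idm_at[OF y] mult_F_def ..
  moreover have "dim_col (s g (simple_obj (aX h x)) y) = mult_F (aX ?gh x) y"
    using s_simple_obj_carrier[OF g act_closed[OF n1 GX h x] y] act_add[OF n1 GX g h x] by simp
  ultimately show ?thesis
    using s_modc_at[OF g h simple_obj_objs[OF x] y] unfolding gobj_simple_obj[OF n1 GX h x]
    by (simp add: mult_smult_one_mat)
qed

lemma s_zero_simple_obj:
  assumes x: "x \<in> X" and y: "y \<in> Y" and PX0: "PX 0 0 x = 1" and PY0: "PY 0 0 y = 1"
  shows "s 0 (simple_obj x) y = 1\<^sub>m (mult_F x y)"
proof -
  have n0: "0 < n" using n1 by simp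
  have gi: "ginv n 0 = 0" unfolding ginv_def by simp
  note S = s_simple_obj_carrier[OF n0 x y] and I = sinv_simple_obj_at[OF n0 x y]
  note act0 = act_zero[OF n1 GX x] act_zero[OF n1 GY y]
  let ?s = "s 0 (simple_obj x) y" and ?si = "sinv 0 (simple_obj x) y"
  have idem: "?s * ?s = ?s"
    using s_simple_obj_add[OF n0 n0 x y] PX0 PY0 act0 unfolding gi by simp
  have "?s = (?si * ?s) * ?s" using S I(2) unfolding gi act0 by simp
  also have "\<dots> = ?si * (?s * ?s)" using S I(1) unfolding gi act0 by (simp add: assoc_mult_mat_dim)
  also have "\<dots> = 1\<^sub>m (mult_F x y)" using I(2) unfolding idem act0 .
  finally show ?thesis .
qed

definition stabilizer :: "'x \<Rightarrow> 'y \<Rightarrow> nat set" where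
  "stabilizer x1 y1 = {k. k < n \<and> aX k x1 = x1 \<and> aY k y1 = y1}"

lemma stabilizer_shift:
  assumes x1: "x1 \<in> X" and y1: "y1 \<in> Y" and a: "a < n" and b: "b < n" and St: "b \<in> stabilizer x1 y1"
  shows "(a + b) mod n \<in> stabilizer x1 y1 \<longleftrightarrow> a \<in> stabilizer x1 y1"
  using act_add[OF n1 GX a b x1] act_add[OF n1 GY a b y1] St a n1 unfolding stabilizer_def by auto

lemma s_simple_obj_orbit_at:
  assumes a: "a < n" and x1: "x1 \<in> X" and y1: "y1 \<in> Y"
  shows "s a (simple_obj x1) (aY a y1) \<in> carrier_mat (mult_F x1 y1) (mult_F (aX a x1) (aY a y1))"
    "sinv a (simple_obj x1) (aY a y1) \<in> carrier_mat (mult_F (aX a x1) (aY a y1)) (mult_F x1 y1)"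
    "sinv a (simple_obj x1) (aY a y1) * s a (simple_obj x1) (aY a y1) = 1\<^sub>m (mult_F (aX a x1) (aY a y1))"
    "s a (simple_obj x1) (aY a y1) * sinv a (simple_obj x1) (aY a y1) = 1\<^sub>m (mult_F x1 y1)"
  using s_simple_obj_carrier[OF a x1 act_closed[OF n1 GY a y1]]
    sinv_simple_obj_at[OF a x1 act_closed[OF n1 GY a y1]] ginv_act[OF n1 GY a y1]
  by simp_all

lemma s_stabilizer_pow:
  assumes PsiX: "is_Psi n \<omega> X aX PX" and PsiY: "is_Psi n \<omega> Y aY PY"
    and x1: "x1 \<in> X" and y1: "y1 \<in> Y" and h0: "h0 \<in> stabilizer x1 y1" and q: "q * h0 < n"
  shows "\<exists>c. s (q * h0) (simple_obj x1) y1 = c \<cdot>\<^sub>m (s h0 (simple_obj x1) y1 ^\<^sub>m q)"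
  using q
proof (induction q)
  case 0
  have "s 0 (simple_obj x1) y1 = 1\<^sub>m (mult_F x1 y1)"
    using s_zero_simple_obj[OF x1 y1] is_Psi_zero_zero[OF PsiX _ x1] is_Psi_zero_zero[OF PsiY _ y1] n1 by simp
  moreover have "dim_row (s h0 (simple_obj x1) y1) = mult_F x1 y1"
    using s_simple_obj_orbit_at(1)[OF _ x1 y1, of h0] h0 unfolding stabilizer_def by simp
  ultimately show ?case by (intro exI[of _ 1]) simp
next
  case (Suc q)
  let ?P = "s h0 (simple_obj x1) y1" and ?k = "q * h0"
  have h0n: "h0 < n" using h0 unfolding stabilizer_def by simp
  have kn: "?k < n" using Suc.prems by (simp add: order.strict_trans1)
  then obtain c where c: "s ?k (simple_obj x1) y1 = c \<cdot>\<^sub>m (?P ^\<^sub>m q)" using Suc.IH by blast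
  have "?k \<in> stabilizer x1 y1"
    using shift_invariant_multiples[of n "\<lambda>k. k \<in> stabilizer x1 y1", OF stabilizer_shift[OF x1 y1] h0 h0n kn] .
  then have kx: "aX ?k x1 = x1" and ky: "aY ?k y1 = y1" unfolding stabilizer_def by auto
  have P: "?P \<in> carrier_mat (mult_F x1 y1) (mult_F x1 y1)"
    using s_simple_obj_orbit_at(1)[OF h0n x1 y1] h0 unfolding stabilizer_def by simp
  have "PY h0 ?k y1 \<cdot>\<^sub>m s (Suc q * h0) (simple_obj x1) y1
      = PX h0 ?k (aX (Suc q * h0) x1) \<cdot>\<^sub>m (s ?k (simple_obj x1) y1 * ?P)"
    using s_simple_obj_add[OF h0n kn x1 y1] ginv_act[OF n1 GY h0n y1] Suc.prems h0 kx
    unfolding stabilizer_def by (simp add: add.commute)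
  also have "\<dots> = (PX h0 ?k (aX (Suc q * h0) x1) * c) \<cdot>\<^sub>m (?P ^\<^sub>m Suc q)"
    unfolding c using P by (simp add: mult_smult_assoc_mat_dim smult_smult_mat)
  finally have "s (Suc q * h0) (simple_obj x1) y1
      = inverse (PY h0 ?k y1) \<cdot>\<^sub>m ((PX h0 ?k (aX (Suc q * h0) x1) * c) \<cdot>\<^sub>m (?P ^\<^sub>m Suc q))"
    by (rule smult_mat_eq_imp_inverse[OF is_Psi_nonzero[OF PsiY h0n kn y1]])
  then show ?case unfolding smult_smult_mat by blast
qed

lemma stabilizer_s_powers:
  assumes PsiX: "is_Psi n \<omega> X aX PX" and PsiY: "is_Psi n \<omega> Y aY PY" and x1: "x1 \<in> X" and y1: "y1 \<in> Y"
  obtains h0 where "h0 \<in> stabilizer x1 y1"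
    "\<And>k. k \<in> stabilizer x1 y1 \<Longrightarrow> \<exists>c j. s k (simple_obj x1) y1 = c \<cdot>\<^sub>m (s h0 (simple_obj x1) y1 ^\<^sub>m j)"
proof (cases "\<exists>h. 0 < h \<and> h \<in> stabilizer x1 y1")
  case True
  define h0 where "h0 = (LEAST h. 0 < h \<and> h \<in> stabilizer x1 y1)"
  have h0: "0 < h0" "h0 \<in> stabilizer x1 y1" unfolding h0_def using LeastI_ex[OF True] by auto
  then have h0n: "h0 < n" unfolding stabilizer_def by simp
  have least: "h \<notin> stabilizer x1 y1" if "0 < h" "h < h0" for h
    using not_less_Least[of h "\<lambda>h. 0 < h \<and> h \<in> stabilizer x1 y1"] that unfolding h0_def by auto
  show ?thesis
  proof (rule that[OF h0(2)])
    fix k assume k: "k \<in> stabilizer x1 y1"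
    then have kn: "k < n" unfolding stabilizer_def by simp
    have "h0 dvd k"
      by (rule shift_invariant_dvd[of n "\<lambda>k. k \<in> stabilizer x1 y1", OF stabilizer_shift[OF x1 y1] h0 h0n least k kn])
    then obtain q where "k = q * h0" by (metis dvdE mult.commute)
    then show "\<exists>c j. s k (simple_obj x1) y1 = c \<cdot>\<^sub>m (s h0 (simple_obj x1) y1 ^\<^sub>m j)"
      using s_stabilizer_pow[OF PsiX PsiY x1 y1 h0(2)] kn by blast
  qed
next
  case False
  have zero: "0 \<in> stabilizer x1 y1"
    using n1 act_zero[OF n1 GX x1] act_zero[OF n1 GY y1] unfolding stabilizer_def by simp
  show ?thesis
  proof (rule that[OF zero])
    fix k assume "k \<in> stabilizer x1 y1"
    then have k: "k = 0" using False by auto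
    obtain c where "s (1 * 0) (simple_obj x1) y1 = c \<cdot>\<^sub>m (s 0 (simple_obj x1) y1 ^\<^sub>m 1)"
      using s_stabilizer_pow[OF PsiX PsiY x1 y1 zero, of 1] n1 by auto
    then show "\<exists>c j. s k (simple_obj x1) y1 = c \<cdot>\<^sub>m (s 0 (simple_obj x1) y1 ^\<^sub>m j)"
      unfolding k mult_1 by blast
  qed
qed

lemma stabilizer_singular_commutant:
  assumes ac: "alg_closed_field TYPE('a)" and PsiX: "is_Psi n \<omega> X aX PX" and PsiY: "is_Psi n \<omega> Y aY PY"
    and x1: "x1 \<in> X" and y1: "y1 \<in> Y" and m2: "2 \<le> mult_F x1 y1"
  obtains E N where "E \<in> carrier_mat (mult_F x1 y1) (mult_F x1 y1)" "E \<noteq> 0\<^sub>m (mult_F x1 y1) (mult_F x1 y1)"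
    "N \<in> carrier_mat (mult_F x1 y1) 1" "N \<noteq> 0\<^sub>m (mult_F x1 y1) 1" "E * N = 0\<^sub>m (mult_F x1 y1) 1"
    "\<And>k. k \<in> stabilizer x1 y1 \<Longrightarrow> E * s k (simple_obj x1) y1 = s k (simple_obj x1) y1 * E"
proof -
  let ?m = "mult_F x1 y1"
  obtain h0 where h0: "h0 \<in> stabilizer x1 y1"
    and pow: "\<And>k. k \<in> stabilizer x1 y1 \<Longrightarrow> \<exists>c j. s k (simple_obj x1) y1 = c \<cdot>\<^sub>m (s h0 (simple_obj x1) y1 ^\<^sub>m j)"
    using stabilizer_s_powers[OF PsiX PsiY x1 y1] by blast
  have P: "s h0 (simple_obj x1) y1 \<in> carrier_mat ?m ?m"
    using s_simple_obj_orbit_at(1)[OF _ x1 y1, of h0] h0 unfolding stabilizer_def by simp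
  obtain E N where E: "E \<in> carrier_mat ?m ?m" and EP: "E * s h0 (simple_obj x1) y1 = s h0 (simple_obj x1) y1 * E"
    and "E \<noteq> 0\<^sub>m ?m ?m" "N \<in> carrier_mat ?m 1" "N \<noteq> 0\<^sub>m ?m 1" "E * N = 0\<^sub>m ?m 1"
    using singular_commuting_mat_exists[OF ac P m2] by blast
  moreover have "E * s k (simple_obj x1) y1 = s k (simple_obj x1) y1 * E" if "k \<in> stabilizer x1 y1" for k
    using pow[OF that] commute_pow_mat[OF E P EP] by auto
  ultimately show ?thesis using that by blast
qed

lemma s_orbit_factor:
  assumes PsiX: "is_Psi n \<omega> X aX PX" and PsiY: "is_Psi n \<omega> Y aY PY"
    and g: "g < n" and a: "a < n" and b: "b < n" and x1: "x1 \<in> X" and y1: "y1 \<in> Y" and y: "y \<in> Y"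
    and xa: "aX g (aX b x1) = aX a x1" and ya: "y = aY a y1" and yb: "aY (ginv n g) y = aY b y1"
  shows "\<exists>c k. k \<in> stabilizer x1 y1 \<and>
    s b (simple_obj x1) (aY (ginv n g) y) * s g (simple_obj (aX b x1)) y = c \<cdot>\<^sub>m (s k (simple_obj x1) y1 * s a (simple_obj x1) y)"
proof -
  let ?gb = "(g + b) mod n"
  define k where "k = (ginv n a + ?gb) mod n"
  have gbn: "?gb < n" and kn: "k < n" and gi: "ginv n a < n" unfolding k_def using n1 ginv_lt[OF n1] by simp_all
  have akgb: "(a + k) mod n = ?gb" unfolding k_def by (rule add_ginv_add_mod[OF n1 a gbn])
  have gbx: "aX ?gb x1 = aX a x1" using act_add[OF n1 GX g b x1] xa by simp
  have gby: "aY ?gb y1 = aY a y1" using act_add[OF n1 GY g b y1] yb[symmetric] act_ginv[OF n1 GY g y] ya by simp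
  have kx: "aX k x1 = x1" unfolding k_def using act_add[OF n1 GX gi gbn x1] gbx ginv_act[OF n1 GX a x1] by simp
  have ky: "aY k y1 = y1" unfolding k_def using act_add[OF n1 GY gi gbn y1] gby ginv_act[OF n1 GY a y1] by simp
  have y1a: "aY (ginv n a) y = y1" unfolding ya by (rule ginv_act[OF n1 GY a y1])
  have "PY g b y \<cdot>\<^sub>m s ?gb (simple_obj x1) y
      = PX g b (aX ?gb x1) \<cdot>\<^sub>m (s b (simple_obj x1) (aY (ginv n g) y) * s g (simple_obj (aX b x1)) y)"
    by (rule s_simple_obj_add[OF g b x1 y])
  then have r1: "s b (simple_obj x1) (aY (ginv n g) y) * s g (simple_obj (aX b x1)) y
      = (inverse (PX g b (aX ?gb x1)) * PY g b y) \<cdot>\<^sub>m s ?gb (simple_obj x1) y"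
    using smult_mat_eq_imp_inverse[OF is_Psi_nonzero[OF PsiX g b act_closed[OF n1 GX gbn x1]]]
    by (metis smult_smult_mat)
  have "PY a k y \<cdot>\<^sub>m s ?gb (simple_obj x1) y = PX a k (aX ?gb x1) \<cdot>\<^sub>m (s k (simple_obj x1) y1 * s a (simple_obj x1) y)"
    using s_simple_obj_add[OF a kn x1 y] unfolding akgb y1a kx .
  then have r2: "s ?gb (simple_obj x1) y = (inverse (PY a k y) * PX a k (aX ?gb x1)) \<cdot>\<^sub>m (s k (simple_obj x1) y1 * s a (simple_obj x1) y)"
    using smult_mat_eq_imp_inverse[OF is_Psi_nonzero[OF PsiY a kn y]] by (metis smult_smult_mat)
  have "k \<in> stabilizer x1 y1" using kn kx ky unfolding stabilizer_def by simp
  then show ?thesis unfolding r1 r2 smult_smult_mat by blast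
qed

definition orbit_rep :: "'x \<Rightarrow> 'y \<Rightarrow> 'x \<Rightarrow> 'y \<Rightarrow> nat" where
  "orbit_rep x1 y1 x y = (SOME a. a < n \<and> x = aX a x1 \<and> y = aY a y1)"

lemma orbit_rep:
  assumes "(x, y) \<in> orbit x1 y1"
  shows "orbit_rep x1 y1 x y < n" "x = aX (orbit_rep x1 y1 x y) x1" "y = aY (orbit_rep x1 y1 x y) y1"
proof -
  have "\<exists>a. a < n \<and> x = aX a x1 \<and> y = aY a y1" using assms unfolding orbit_def by auto
  from someI_ex[OF this] show "orbit_rep x1 y1 x y < n" "x = aX (orbit_rep x1 y1 x y) x1" "y = aY (orbit_rep x1 y1 x y) y1"
    unfolding orbit_rep_def by blast+
qed

text \<open>The group element carrying \<open>(x1, y1)\<close> to \<open>(x, y)\<close> is only determined up to the stabiliser,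
  whence the commutation hypothesis of \<open>orbit_transport_compatible\<close>.\<close>
definition orbit_transport :: "'x \<Rightarrow> 'y \<Rightarrow> 'a mat \<Rightarrow> 'x \<Rightarrow> 'y \<Rightarrow> 'a mat" where
  "orbit_transport x1 y1 E0 x y = (if (x, y) \<in> orbit x1 y1
     then sinv (orbit_rep x1 y1 x y) (simple_obj x1) y * E0 * s (orbit_rep x1 y1 x y) (simple_obj x1) y
     else 0\<^sub>m (mult_F x y) (mult_F x y))"

lemma orbit_transport_carrier:
  assumes x1: "x1 \<in> X" and y1: "y1 \<in> Y" and E0: "E0 \<in> carrier_mat (mult_F x1 y1) (mult_F x1 y1)"
  shows "orbit_transport x1 y1 E0 x y \<in> carrier_mat (mult_F x y) (mult_F x y)"
proof (cases "(x, y) \<in> orbit x1 y1")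
  case True
  note rep = orbit_rep[OF True]
  show ?thesis
    using s_simple_obj_orbit_at(1,2)[OF rep(1) x1 y1, folded rep(2,3)] E0 True
    unfolding orbit_transport_def by (auto intro!: mult_carrier_mat)
qed (simp add: orbit_transport_def)

lemma orbit_transport_compatible:
  assumes PsiX: "is_Psi n \<omega> X aX PX" and PsiY: "is_Psi n \<omega> Y aY PY" and x1: "x1 \<in> X" and y1: "y1 \<in> Y"
    and E0: "E0 \<in> carrier_mat (mult_F x1 y1) (mult_F x1 y1)"
    and comm: "\<And>k. k \<in> stabilizer x1 y1 \<Longrightarrow> E0 * s k (simple_obj x1) y1 = s k (simple_obj x1) y1 * E0"
  shows "compatible_family (orbit_transport x1 y1 E0)"
  unfolding compatible_family_def
proof (intro conjI ballI allI impI)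
  fix x y
  show "orbit_transport x1 y1 E0 x y \<in> carrier_mat (mult_F x y) (mult_F x y)"
    by (rule orbit_transport_carrier[OF x1 y1 E0])
next
  fix g x y assume g: "g < n" and x: "x \<in> X" and y: "y \<in> Y"
  let ?y' = "aY (ginv n g) y"
  note Tg = s_simple_obj_carrier[OF g x y]
  show "s g (simple_obj x) y * orbit_transport x1 y1 E0 (aX g x) y = orbit_transport x1 y1 E0 x ?y' * s g (simple_obj x) y"
  proof (cases "(aX g x, y) \<in> orbit x1 y1")
    case False
    then have "(x, ?y') \<notin> orbit x1 y1" using orbit_shift[OF g x y x1 y1] by simp
    then show ?thesis using False Tg unfolding orbit_transport_def by simp
  next
    case True
    then have T2: "(x, ?y') \<in> orbit x1 y1" using orbit_shift[OF g x y x1 y1] by simp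
    define a where "a = orbit_rep x1 y1 (aX g x) y"
    define b where "b = orbit_rep x1 y1 x ?y'"
    note a = orbit_rep[OF True, folded a_def] and b = orbit_rep[OF T2, folded b_def]
    note Ta = s_simple_obj_orbit_at[OF a(1) x1 y1, folded a(2,3)]
      and Tb = s_simple_obj_orbit_at[OF b(1) x1 y1, folded b(2,3)]
    obtain c k where k: "k \<in> stabilizer x1 y1"
      and TbTg: "s b (simple_obj x1) ?y' * s g (simple_obj x) y = c \<cdot>\<^sub>m (s k (simple_obj x1) y1 * s a (simple_obj x1) y)"
      using s_orbit_factor[OF PsiX PsiY g a(1) b(1) x1 y1 y _ a(3) b(3)] a(2) b(2) by metis
    have Tk: "s k (simple_obj x1) y1 \<in> carrier_mat (mult_F x1 y1) (mult_F x1 y1)"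
      using s_simple_obj_orbit_at(1)[OF _ x1 y1, of k] k unfolding stabilizer_def by simp
    have "s g (simple_obj x) y * (sinv a (simple_obj x1) y * E0 * s a (simple_obj x1) y)
      = (sinv b (simple_obj x1) ?y' * E0 * s b (simple_obj x1) ?y') * s g (simple_obj x) y"
    proof (rule conjugate_intertwining[OF Ta(1,2,4) Tb(1,2,3,4) Tg _ E0])
      show "c \<cdot>\<^sub>m s k (simple_obj x1) y1 \<in> carrier_mat (mult_F x1 y1) (mult_F x1 y1)" using Tk by simp
      show "s b (simple_obj x1) ?y' * s g (simple_obj x) y = (c \<cdot>\<^sub>m s k (simple_obj x1) y1) * s a (simple_obj x1) y"
        unfolding TbTg using Tk Ta(1) by (simp add: mult_smult_assoc_mat_dim)
      show "E0 * (c \<cdot>\<^sub>m s k (simple_obj x1) y1) = (c \<cdot>\<^sub>m s k (simple_obj x1) y1) * E0"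
        using comm[OF k] E0 Tk by (simp add: mult_smult_distrib_dim mult_smult_assoc_mat_dim)
    qed
    then show ?thesis unfolding orbit_transport_def a_def b_def using True T2 by simp
  qed
qed

text \<open>Otherwise transporting a nonzero singular matrix commuting with the stabiliser would give
  an endomorphism of the simple functor that is neither zero nor injective.\<close>
theorem mult_F_le_one:
  assumes simple: "simple_mf n X aX PX Y aY PY (Fo, Fm, s)" and fin: "finite X"
    and ac: "alg_closed_field TYPE('a)" and PsiX: "is_Psi n \<omega> X aX PX" and PsiY: "is_Psi n \<omega> Y aY PY"
    and x1: "x1 \<in> X" and y1: "y1 \<in> Y"
  shows "mult_F x1 y1 \<le> 1"
proof (rule ccontr)
  let ?m = "mult_F x1 y1"
  assume "\<not> ?m \<le> 1"
  then have m2: "2 \<le> ?m" by simp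
  obtain E0 N where E0: "E0 \<in> carrier_mat ?m ?m" "E0 \<noteq> 0\<^sub>m ?m ?m"
    and N: "N \<in> carrier_mat ?m 1" "N \<noteq> 0\<^sub>m ?m 1" "E0 * N = 0\<^sub>m ?m 1"
    and comm: "\<And>k. k \<in> stabilizer x1 y1 \<Longrightarrow> E0 * s k (simple_obj x1) y1 = s k (simple_obj x1) y1 * E0"
    using stabilizer_singular_commutant[OF ac PsiX PsiY x1 y1 m2] by blast
  have o1: "(x1, y1) \<in> orbit x1 y1" by (rule orbit_self[OF x1 y1])
  define a where "a = orbit_rep x1 y1 x1 y1"
  define T where "T = s a (simple_obj x1) y1"
  define Ti where "Ti = sinv a (simple_obj x1) y1"
  note rep = orbit_rep[OF o1, folded a_def]
  note TT = s_simple_obj_orbit_at[OF rep(1) x1 y1, folded rep(2,3), folded T_def Ti_def]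
  have E11: "orbit_transport x1 y1 E0 x1 y1 = Ti * E0 * T"
    unfolding orbit_transport_def T_def Ti_def a_def using o1 by simp
  from compatible_family_zero_or_injective[OF simple fin orbit_transport_compatible[OF PsiX PsiY x1 y1 E0(1) comm]]
  show False
  proof
    assume "\<forall>x\<in>X. \<forall>y\<in>Y. orbit_transport x1 y1 E0 x y = 0\<^sub>m (mult_F x y) (mult_F x y)"
    then have "Ti * E0 * T = 0\<^sub>m ?m ?m" using x1 y1 E11 by auto
    then show False using conjugate_mat_eq_zero[OF TT(1,2,4) E0(1)] E0(2) by blast
  next
    assume inj: "\<forall>x\<in>X. \<forall>y\<in>Y. \<forall>c N. N \<in> carrier_mat (mult_F x y) c \<longrightarrow>
      orbit_transport x1 y1 E0 x y * N = 0\<^sub>m (mult_F x y) c \<longrightarrow> N = 0\<^sub>m (mult_F x y) c"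
    note conj = conjugate_mat_kernel[OF TT(1,2,4) E0(1) N]
    show False
      using inj[rule_format, OF x1 y1 mult_carrier_mat[OF TT(2) N(1)]] conj unfolding E11 by blast
  qed
qed

lemma mult_F_orbit_nonzero:
  assumes x0: "x0 \<in> X" and y0: "y0 \<in> Y" and nz: "mult_F x0 y0 \<noteq> 0" and xy: "(x, y) \<in> orbit x0 y0"
  shows "mult_F x y \<noteq> 0"
proof
  assume zero: "mult_F x y = 0"
  from xy obtain a where a: "a < n" and x: "x = aX a x0" and y: "y = aY a y0" unfolding orbit_def by auto
  note T = s_simple_obj_orbit_at[OF a x0 y0, folded x y, unfolded zero]
  have "(1\<^sub>m (mult_F x0 y0) :: 'a mat) = 0\<^sub>m (mult_F x0 y0) (mult_F x0 y0)"
    using mult_mat_zero_inner[OF T(1,2)] T(4) by simp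
  from one_mat_eq_zero_mat[OF this] show False using nz by simp
qed

end

lemma hom_dim_simple_obj: "finite Y \<Longrightarrow> y \<in> Y \<Longrightarrow> hom_dim Y d (simple_obj y) = d y"
  unfolding hom_dim_def simple_obj_def by (simp add: if_distrib[of "\<lambda>t. _ * t"] cong: if_cong)

theorem lemma5p20:
  fixes n :: nat and \<omega> :: "nat \<Rightarrow> nat \<Rightarrow> nat \<Rightarrow> 'a::field"
    and X :: "'x set" and aX :: "nat \<Rightarrow> 'x \<Rightarrow> 'x" and PX :: "nat \<Rightarrow> nat \<Rightarrow> 'x \<Rightarrow> 'a"
    and Y :: "'y set" and aY :: "nat \<Rightarrow> 'y \<Rightarrow> 'y" and PY :: "nat \<Rightarrow> nat \<Rightarrow> 'y \<Rightarrow> 'a"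
    and F :: "('x, 'y, 'a) mfun"
  assumes "alg_closed_field TYPE('a)"
    and "n \<ge> 1"
    and "normalized_3cocycle n \<omega>"
    and "finite X" and "is_Gset n X aX" and "is_Psi n \<omega> X aX PX"
    and "finite Y" and "is_Gset n Y aY" and "is_Psi n \<omega> Y aY PY"
    and "simple_mf n X aX PX Y aY PY F"
  shows "\<exists>x0\<in>X. \<exists>y0\<in>Y. \<forall>x\<in>X. \<forall>y\<in>Y.
           hom_dim Y (fst F (simple_obj x)) (simple_obj y)
             = (if (x, y) \<in> {(aX g x0, aY g y0) | g. g < n} then 1 else 0)"
proof -
  obtain Fo Fm s where F: "F = (Fo, Fm, s)" by (cases F)
  note simple = assms(10)[unfolded F]
  interpret cyclic_module_functor n X aX PX Y aY PY Fo Fm s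
    using assms(2,5,8) simple unfolding simple_mf_def by unfold_locales auto
  have le1: "\<And>x y. x \<in> X \<Longrightarrow> y \<in> Y \<Longrightarrow> mult_F x y \<le> 1"
    by (rule mult_F_le_one[OF simple assms(4,1,6,9)])
  obtain x0 y0 where x0: "x0 \<in> X" and y0: "y0 \<in> Y" and nz: "mult_F x0 y0 \<noteq> 0"
    using nonzero_mult_F_exists[OF assms(4)] simple unfolding simple_mf_def by blast
  have "mult_F x y = (if (x, y) \<in> orbit x0 y0 then 1 else 0)" if xy: "x \<in> X" "y \<in> Y" for x y
  proof (cases "(x, y) \<in> orbit x0 y0")
    case True
    then show ?thesis using mult_F_orbit_nonzero[OF x0 y0 nz True] le1[OF xy] by simp
  next
    case False
    then show ?thesis using mult_F_orbit_support[OF simple assms(4) x0 y0 nz xy] by simp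
  qed
  then show ?thesis
    using x0 y0 hom_dim_simple_obj[OF assms(7)] unfolding F mult_F_def orbit_def by auto
qed

end
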